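(* Let $0<q<1$ and $\Sigma\sim\mathrm{Mallows}(\mathbb{Z},q)$. As $k\to\infty$: (1) $\mathbb{P}(C_1(\rho\circ\Sigma)\ge2k)=\Omega\bigl(q^{\binom{2k}{2}}(1-q)^{2k}\bigr)$; (2) $\mathbb{P}(C_1(r\circ\Sigma)\ge2k)=o\bigl(q^{\binom{2k}{2}}(1-q)^{2k}\bigr)$; (3) $\mathbb{P}(C_1(r\circ\Sigma)\ge2k+1)=\Omega\bigl(q^{\binom{2k+1}{2}}(1-q)^{2k+1}\bigr)$; (4) $\mathbb{P}(C_1(\rho\circ\Sigma)\ge2k+1)=o\bigl(q^{\binom{2k+1}{2}}(1-q)^{2k+1}\bigr)$.
   Context: For a finite set $A\subseteq\mathbb{Z}$ and a bijection $\pi:A\to A$, $\mathrm{inv}(\pi)$ is the number of pairs $i<j$ in $A$ with $\pi(i)>\pi(j)$, and $\Pi_A\sim\mathrm{Mallows}(A,q)$ means $\mathbb{P}(\Pi_A=\pi)\propto q^{\mathrm{inv}(\pi)}$ over bijections $\pi$ of $A$. For a bijection $\sigma$ of a set $B\subseteq\mathbb{Z}$ and finite $A\subseteq B$, the pattern $\sigma_A:A\to A$ is defined by $\sigma_A(a)=a_{(i)}$ when $\sigma(a)$ is the $i$-th smallest element of $\sigma[A]$, where $a_{(i)}$ is the $i$-th smallest element of $A$. For $0<q<1$, $\mathrm{Mallows}(\mathbb{Z},q)$ is Gnedin and Olshanski's bi-infinite Mallows measure: the law of a random bijection $\Sigma$ of $\mathbb{Z}$ such that $\Sigma_I\sim\mathrm{Mallows}(I,q)$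 for every finite interval of integers $I$, and, with $I_n=\{-n,\dots,n\}$, almost surely for every $i\in\mathbb{Z}$ one has $\Sigma_{I_n}(i)=\Sigma(i)$ for all sufficiently large $n$. $C_1(\pi)$ is the number of fixed points of a permutation $\pi$ of $\mathbb{Z}$. The maps $r,\rho:\mathbb{Z}\to\mathbb{Z}$ are $r(i)=-i$, $\rho(i)=1-i$. $f=\Omega(g)$ means $f\ge cg$ for some constant $c>0$ and all large $k$; $f=o(g)$ means $f/g\to0$. *)

theory Defs
  imports "HOL-Probability.Probability" "HOL-Library.Landau_Symbols" "HOL-Library.Extended_Nat"
begin

definition kth_smallest :: "int set \<Rightarrow> nat \<Rightarrow> int" where
  "kth_smallest A i = (THE x. x \<in> A \<and> card {y \<in> A. y < x} = i)"

definition pattern :: "(int \<Rightarrow> int) \<Rightarrow> int set \<Rightarrow> int \<Rightarrow> int" where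
  "pattern \<sigma> A a =
     (if a \<in> A then kth_smallest A (card {b \<in> \<sigma> ` A. b < \<sigma> a}) else a)"

definition perms_of :: "int set \<Rightarrow> (int \<Rightarrow> int) set" where
  "perms_of A = {\<pi>. bij_betw \<pi> A A \<and> (\<forall>x. x \<notin> A \<longrightarrow> \<pi> x = x)}"

definition inversions :: "(int \<Rightarrow> int) \<Rightarrow> int set \<Rightarrow> nat" where
  "inversions \<pi> A = card {(i, j). i \<in> A \<and> j \<in> A \<and> i < j \<and> \<pi> j < \<pi> i}"

definition mallows_prob :: "int set \<Rightarrow> real \<Rightarrow> (int \<Rightarrow> int) \<Rightarrow> real" where
  "mallows_prob A q \<pi> = q ^ inversions \<pi> A / (\<Sum>\<tau>\<in>perms_of A. q ^ inversions \<tau> A)"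

text \<open>Sigma (a random function Z -> Z on the probability space M) has law Mallows(Z,q)
  (Gnedin--Olshanski bi-infinite Mallows measure).\<close>
definition mallows_Z :: "'a measure \<Rightarrow> real \<Rightarrow> ('a \<Rightarrow> int \<Rightarrow> int) \<Rightarrow> bool" where
  "mallows_Z M q \<Sigma> \<longleftrightarrow>
     (\<forall>i. (\<lambda>\<omega>. \<Sigma> \<omega> i) \<in> measurable M (count_space UNIV)) \<and>
     (AE \<omega> in M. bij (\<Sigma> \<omega>)) \<and>
     (\<forall>a b \<pi>. \<pi> \<in> perms_of {a..b} \<longrightarrow>
        measure M {\<omega> \<in> space M. pattern (\<Sigma> \<omega>) {a..b} = \<pi>} = mallows_prob {a..b} q \<pi>) \<and>
     (AE \<omega> in M. \<forall>i. \<exists>N. \<forall>n\<ge>N. pattern (\<Sigma> \<omega>) {-int n..int n} i = \<Sigma> \<omega> i)"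

definition C1 :: "(int \<Rightarrow> int) \<Rightarrow> enat" where
  "C1 \<pi> = (if finite {i. \<pi> i = i} then enat (card {i. \<pi> i = i}) else \<infinity>)"

definition r_map :: "int \<Rightarrow> int" where "r_map i = - i"
definition rho_map :: "int \<Rightarrow> int" where "rho_map i = 1 - i"

end

theory Submission
  imports Defs
begin

text \<open>For \<open>f x = d - x\<close>, \<open>C1 (f \<circ> \<Sigma>) \<ge> K\<close> means that \<open>\<Sigma>\<close> maps some \<open>K\<close>-set \<open>S\<close> onto
  \<open>d - S\<close>, reversing its order. In a Mallows permutation of \<open>{-n..n}\<close> this forces
  \<open>(K choose 2)\<close> inversions inside \<open>S\<close> plus at least the displacement of \<open>S\<close>, which
  measures how far \<open>S\<close> is from an interval symmetric about \<open>d/2\<close>; the ratio of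
  \<open>q\<close>-factorials normalising the remaining permutation contributes \<open>(1 - q)\<^sup>K\<close> up to
  constants. If \<open>K - d\<close> is odd, the block \<open>{a..b}\<close> with \<open>a + b = d\<close> has displacement \<open>0\<close>
  and gives the lower bound. If \<open>K - d\<close> is even, every \<open>K\<close>-set has positive displacement
  and the sum of \<open>q ^ displacement S\<close> over all of them is \<open>O(K q\<^sup>K)\<close>, which gives the upper
  bound. Since the patterns of \<open>\<Sigma>\<close> on \<open>{-n..n}\<close> almost surely eventually agree with
  \<open>\<Sigma>\<close> on any finite set, these bounds pass to the limit. With \<open>d = 0\<close> for \<open>r\<close> and
  \<open>d = 1\<close> for \<open>\<rho>\<close>, the parities of \<open>2k\<close> and \<open>2k + 1\<close> give the four claims.\<close>

section \<open>Inversions of permutations with prescribed values\<close>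

definition perms_between :: "int set \<Rightarrow> int set \<Rightarrow> (int \<Rightarrow> int) set" where
  "perms_between A B = {\<pi>. bij_betw \<pi> A B \<and> (\<forall>x. x \<notin> A \<longrightarrow> \<pi> x = x)}"

fun q_factorial :: "real \<Rightarrow> nat \<Rightarrow> real" where
  "q_factorial q 0 = 1"
| "q_factorial q (Suc n) = q_factorial q n * (\<Sum>j<Suc n. q ^ j)"

lemma perms_of_eq_perms_between: "perms_of A = perms_between A A"
  by (simp add: perms_of_def perms_between_def)

lemma finite_perms_between:
  assumes "finite A" "finite B"
  shows "finite (perms_between A B)"
proof -
  have "inj_on (\<lambda>\<pi>. restrict \<pi> A) (perms_between A B)"
  proof (rule inj_onI)
    fix f g assume fg: "f \<in> perms_between A B" "g \<in> perms_between A B"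
      and eq: "restrict f A = restrict g A"
    show "f = g"
    proof
      fix x show "f x = g x"
        using fg fun_cong[OF eq, of x] unfolding perms_between_def by (cases "x \<in> A") auto
    qed
  qed
  moreover have "(\<lambda>\<pi>. restrict \<pi> A) ` perms_between A B \<subseteq> A \<rightarrow>\<^sub>E B"
    unfolding perms_between_def bij_betw_def by auto
  moreover have "finite (A \<rightarrow>\<^sub>E B)"
    using assms by (simp add: finite_PiE)
  ultimately show ?thesis
    by (meson finite_imageD finite_subset)
qed

lemma finite_perms_of: "finite A \<Longrightarrow> finite (perms_of A)"
  by (simp add: perms_of_eq_perms_between finite_perms_between)

lemma sum_power_card_greater:
  fixes B :: "int set" and q :: real
  assumes "finite B"
  shows "(\<Sum>b\<in>B. q ^ card {y\<in>B. b < y}) = (\<Sum>j<card B. q ^ j)"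
proof -
  let ?g = "\<lambda>b. card {y\<in>B. b < y}"
  have "?g c < ?g b" if "b \<in> B" "c \<in> B" "b < c" for b c
    using assms that by (intro psubset_card_mono) auto
  then have inj: "inj_on ?g B"
    by (intro inj_onI) (metis less_irrefl linorder_neqE)
  have "?g ` B \<subseteq> {..<card B}"
    using assms by (auto intro!: psubset_card_mono)
  moreover have "card (?g ` B) = card {..<card B}"
    using inj by (simp add: card_image)
  ultimately have "?g ` B = {..<card B}"
    by (intro card_subset_eq) auto
  then show ?thesis
    using sum.reindex[OF inj, of "\<lambda>j. q ^ j"] by simp
qed

lemma fun_upd_in_perms_between:
  assumes "\<pi> \<in> perms_between (A - {a}) (B - {b})" "a \<in> A" "b \<in> B"
  shows "\<pi>(a := b) \<in> perms_between A B"
proof -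
  have bij: "bij_betw \<pi> (A - {a}) (B - {b})" and id: "\<forall>x. x \<notin> A - {a} \<longrightarrow> \<pi> x = x"
    using assms(1) unfolding perms_between_def by auto
  have "bij_betw (\<pi>(a := b)) (A - {a}) (B - {b})"
    using bij by (rule bij_betw_cong[THEN iffD1, rotated]) auto
  then have "bij_betw (\<pi>(a := b)) ((A - {a}) \<union> {a}) ((B - {b}) \<union> {b})"
    by (rule bij_betw_combine) auto
  then show ?thesis
    using assms id unfolding perms_between_def by (simp add: insert_absorb)
qed

lemma perms_between_remove:
  assumes "\<pi> \<in> perms_between A B" "a \<in> A"
  shows "\<pi>(a := a) \<in> perms_between (A - {a}) (B - {\<pi> a})"
proof -
  have bij: "bij_betw \<pi> A B" and id: "\<forall>x. x \<notin> A \<longrightarrow> \<pi> x = x"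
    using assms(1) unfolding perms_between_def by auto
  have "bij_betw \<pi> (A - {a}) (B - {\<pi> a})"
    using bij assms(2) bij_betw_apply[OF bij assms(2)] by (intro bij_betw_DiffI) auto
  then have "bij_betw (\<pi>(a := a)) (A - {a}) (B - {\<pi> a})"
    by (rule bij_betw_cong[THEN iffD1, rotated]) auto
  then show ?thesis
    using id unfolding perms_between_def by auto
qed

lemma perms_between_decomp:
  assumes "a \<in> A"
  shows "perms_between A B = (\<Union>b\<in>B. (\<lambda>\<pi>. \<pi>(a := b)) ` perms_between (A - {a}) (B - {b}))"
proof
  show "perms_between A B \<subseteq> (\<Union>b\<in>B. (\<lambda>\<pi>. \<pi>(a := b)) ` perms_between (A - {a}) (B - {b}))"
  proof
    fix \<pi> assume \<pi>: "\<pi> \<in> perms_between A B"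
    then have "\<pi> a \<in> B" "\<pi> = (\<pi>(a := a))(a := \<pi> a)"
      using assms unfolding perms_between_def bij_betw_def by auto
    with perms_between_remove[OF \<pi> assms]
    show "\<pi> \<in> (\<Union>b\<in>B. (\<lambda>\<pi>. \<pi>(a := b)) ` perms_between (A - {a}) (B - {b}))" by blast
  qed
qed (use fun_upd_in_perms_between assms in blast)

lemma inversions_fun_upd_Max:
  assumes "finite A" "a \<in> A" "\<forall>x\<in>A. x \<le> a"
    and \<pi>: "\<pi> \<in> perms_between (A - {a}) (B - {b})" and "b \<in> B"
  shows "inversions (\<pi>(a := b)) A = inversions \<pi> (A - {a}) + card {y\<in>B. b < y}"
proof -
  have bij: "bij_betw \<pi> (A - {a}) (B - {b})"
    using \<pi> unfolding perms_between_def by auto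
  let ?I = "{(i, j). i \<in> A - {a} \<and> j \<in> A - {a} \<and> i < j \<and> \<pi> j < \<pi> i}"
  let ?S = "{i\<in>A - {a}. b < \<pi> i}"
  have split: "{(i, j). i \<in> A \<and> j \<in> A \<and> i < j \<and> (\<pi>(a := b)) j < (\<pi>(a := b)) i}
      = ?I \<union> (\<lambda>i. (i, a)) ` ?S"
    using assms(2,3) by (auto simp: image_iff)
  have "finite ?I"
    by (rule finite_subset[of _ "A \<times> A"]) (use assms(1) in auto)
  moreover have "card ((\<lambda>i. (i, a)) ` ?S) = card ?S"
    by (rule card_image) (auto simp: inj_on_def)
  moreover have "card ?S = card {y\<in>B. b < y}"
  proof -
    have "bij_betw \<pi> ?S {y\<in>B - {b}. b < y}"
      using bij unfolding bij_betw_def by (auto intro: inj_on_subset)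
    moreover have "{y\<in>B - {b}. b < y} = {y\<in>B. b < y}" by auto
    ultimately show ?thesis by (metis bij_betw_same_card)
  qed
  ultimately show ?thesis
    unfolding inversions_def split using assms(1)
    by (subst card_Un_disjoint) auto
qed

lemma sum_q_inversions_perms_between:
  fixes q :: real
  shows "finite A \<Longrightarrow> finite B \<Longrightarrow> card B = card A \<Longrightarrow>
    (\<Sum>\<pi>\<in>perms_between A B. q ^ inversions \<pi> A) = q_factorial q (card A)"
proof (induction "card A" arbitrary: A B)
  case 0
  then have "perms_between A B = {id}"
    by (auto simp: perms_between_def fun_eq_iff)
  with 0 show ?case by (simp add: inversions_def)
next
  case (Suc n)
  define a where "a = Max A"
  have a: "a \<in> A" "\<forall>x\<in>A. x \<le> a"
    using Suc.prems Suc.hyps(2) unfolding a_def by (auto intro: Max_in)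
  have n: "card (A - {a}) = n"
    using Suc.hyps(2) a by simp
  let ?P = "\<lambda>b. perms_between (A - {a}) (B - {b})"
  have IH: "(\<Sum>\<pi>\<in>?P b. q ^ inversions \<pi> (A - {a})) = q_factorial q n" if "b \<in> B" for b
    using Suc.hyps(1)[of "A - {a}" "B - {b}"] Suc.prems n a(1) that by simp
  have inj: "inj_on (\<lambda>\<pi>. \<pi>(a := b)) (?P b)" for b
  proof (rule inj_onI)
    fix f g assume fg: "f \<in> ?P b" "g \<in> ?P b" and "f(a := b) = g(a := b)"
    moreover have "f a = a" "g a = a"
      using fg unfolding perms_between_def by auto
    ultimately show "f = g"
      by (metis fun_upd_triv fun_upd_upd)
  qed
  have "(\<Sum>\<pi>\<in>perms_between A B. q ^ inversions \<pi> A)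
      = (\<Sum>b\<in>B. \<Sum>\<pi>\<in>(\<lambda>\<pi>. \<pi>(a := b)) ` ?P b. q ^ inversions \<pi> A)"
    unfolding perms_between_decomp[OF a(1)]
    by (rule sum.UNION_disjoint)
      (use Suc.prems in \<open>auto intro: finite_perms_between dest: fun_cong[where x=a]\<close>)
  also have "\<dots> = (\<Sum>b\<in>B. \<Sum>\<pi>\<in>?P b. q ^ card {y\<in>B. b < y} * q ^ inversions \<pi> (A - {a}))"
  proof (rule sum.cong[OF refl])
    fix b assume "b \<in> B"
    then show "(\<Sum>\<pi>\<in>(\<lambda>\<pi>. \<pi>(a := b)) ` ?P b. q ^ inversions \<pi> A)
        = (\<Sum>\<pi>\<in>?P b. q ^ card {y\<in>B. b < y} * q ^ inversions \<pi> (A - {a}))"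
      by (simp add: sum.reindex[OF inj] inversions_fun_upd_Max[OF Suc.prems(1) a] power_add mult.commute)
  qed
  also have "\<dots> = (\<Sum>b\<in>B. q ^ card {y\<in>B. b < y}) * q_factorial q n"
    by (simp add: sum_distrib_left[symmetric] sum_distrib_right IH)
  finally show ?case
    using Suc.prems Suc.hyps(2)[symmetric] by (simp add: sum_power_card_greater mult.commute)
qed

lemma card_ordered_pairs:
  fixes S :: "int set"
  shows "finite S \<Longrightarrow> card {(i, j). i \<in> S \<and> j \<in> S \<and> i < j} = card S choose 2"
proof (induction "card S" arbitrary: S)
  case (Suc n)
  define m where "m = Max S"
  have m: "m \<in> S" "\<forall>x\<in>S. x \<le> m"
    using Suc.prems Suc.hyps(2) unfolding m_def by (auto intro: Max_in)
  have split: "{(i, j). i \<in> S \<and> j \<in> S \<and> i < j}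
      = {(i, j). i \<in> S - {m} \<and> j \<in> S - {m} \<and> i < j} \<union> (\<lambda>i. (i, m)) ` (S - {m})"
    using m by (auto simp: image_iff order.order_iff_strict)
  have n: "card (S - {m}) = n"
    using Suc.hyps(2) m by simp
  have "finite {(i, j). i \<in> S - {m} \<and> j \<in> S - {m} \<and> i < j}"
    by (rule finite_subset[of _ "S \<times> S"]) (use Suc.prems in auto)
  moreover have "card ((\<lambda>i. (i, m)) ` (S - {m})) = n"
    using n by (subst card_image) (auto simp: inj_on_def)
  moreover have "card {(i, j). i \<in> S - {m} \<and> j \<in> S - {m} \<and> i < j} = n choose 2"
    using Suc.hyps(1)[of "S - {m}"] Suc.prems n by simp
  ultimately have "card {(i, j). i \<in> S \<and> j \<in> S \<and> i < j} = (n choose 2) + n"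
    unfolding split using Suc.prems by (subst card_Un_disjoint) auto
  then show ?case
    using Suc.hyps(2)[symmetric] by (simp add: numeral_2_eq_2)
qed simp

lemma card_below_diff_le_crossings:
  fixes \<pi> :: "int \<Rightarrow> int"
  assumes "finite T" "s \<notin> T" "\<forall>x\<in>T. \<pi> x \<noteq> \<pi> s"
  shows "nat \<bar>int (card {x\<in>T. x < s}) - int (card {x\<in>T. \<pi> x < \<pi> s})\<bar>
    \<le> card {x\<in>T. x < s \<and> \<pi> s < \<pi> x} + card {x\<in>T. s < x \<and> \<pi> x < \<pi> s}"
proof -
  have card_le_Un: "card X \<le> card Y + card Z" if "X \<subseteq> Y \<union> Z" "Y \<subseteq> T" "Z \<subseteq> T" for X Y Z
    using card_mono[OF _ that(1)] card_Un_le[of Y Z] finite_subset[OF _ assms(1)] that by fastforce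
  have "card {x\<in>T. x < s} \<le> card {x\<in>T. x < s \<and> \<pi> s < \<pi> x} + card {x\<in>T. \<pi> x < \<pi> s}"
    using assms(3) by (intro card_le_Un) (auto simp: neq_iff)
  moreover have "card {x\<in>T. \<pi> x < \<pi> s} \<le> card {x\<in>T. s < x \<and> \<pi> x < \<pi> s} + card {x\<in>T. x < s}"
    using assms(2) by (intro card_le_Un) (auto simp: not_less le_less)
  ultimately show ?thesis by linarith
qed

lemma restrict_in_perms_between:
  fixes f :: "int \<Rightarrow> int"
  assumes "S \<subseteq> A" "\<pi> \<in> perms_between A A" "\<forall>s\<in>S. \<pi> s = f s"
  shows "(\<lambda>i. if i \<in> S then i else \<pi> i) \<in> perms_between (A - S) (A - f ` S)"
proof -
  have bij: "bij_betw \<pi> A A" and id: "\<forall>x. x \<notin> A \<longrightarrow> \<pi> x = x"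
    using assms(2) unfolding perms_between_def by auto
  have "bij_betw \<pi> S (f ` S)"
    using assms(1,3) bij by (auto simp: bij_betw_def intro: inj_on_subset)
  moreover have "f ` S \<subseteq> A"
    using assms(1,3) bij unfolding bij_betw_def by force
  ultimately have "bij_betw \<pi> (A - S) (A - f ` S)"
    using bij assms(1) by (intro bij_betw_DiffI)
  then have "bij_betw (\<lambda>i. if i \<in> S then i else \<pi> i) (A - S) (A - f ` S)"
    by (rule bij_betw_cong[THEN iffD1, rotated]) auto
  then show ?thesis
    using id unfolding perms_between_def by auto
qed

text \<open>The inversions of \<open>\<pi>\<close> are split into those inside \<open>S\<close> (all pairs, as \<open>f\<close> reverses
  \<open>S\<close>), those outside \<open>S\<close>, and the crossings counted by
  \<open>card_below_diff_le_crossings\<close> for each \<open>s \<in> S\<close>.\<close>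

lemma inversions_prescribed_lower:
  fixes f :: "int \<Rightarrow> int"
  assumes fin: "finite A" and SA: "S \<subseteq> A" and \<pi>: "\<pi> \<in> perms_between A A"
    and \<pi>S: "\<forall>s\<in>S. \<pi> s = f s" and dec: "\<forall>s\<in>S. \<forall>s'\<in>S. s < s' \<longrightarrow> f s' < f s"
  shows "(card S choose 2)
      + (\<Sum>s\<in>S. nat \<bar>int (card {x\<in>A - S. x < s}) - int (card {y\<in>A - f ` S. y < f s})\<bar>)
      + inversions (\<lambda>i. if i \<in> S then i else \<pi> i) (A - S) \<le> inversions \<pi> A"
proof -
  have bij: "bij_betw \<pi> A A" and inj: "inj_on \<pi> A"
    using \<pi> unfolding perms_between_def bij_betw_def by auto
  have finS: "finite S"
    using fin SA finite_subset by auto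
  let ?Inv = "{(i, j). i \<in> A \<and> j \<in> A \<and> i < j \<and> \<pi> j < \<pi> i}"
  let ?IS = "{(i, j). i \<in> S \<and> j \<in> S \<and> i < j}"
  let ?IT = "{(i, j). i \<in> A - S \<and> j \<in> A - S \<and> i < j \<and> \<pi> j < \<pi> i}"
  define L where "L s = {x\<in>A - S. x < s \<and> \<pi> s < \<pi> x}" for s
  define R where "R s = {x\<in>A - S. s < x \<and> \<pi> x < \<pi> s}" for s
  define X where "X s = (\<lambda>x. (x, s)) ` L s \<union> (\<lambda>x. (s, x)) ` R s" for s
  have finX: "finite (X s)" for s
    unfolding X_def L_def R_def using fin by auto
  have card_X: "card (X s) = card (L s) + card (R s)" if "s \<in> S" for s
  proof -
    have "card (X s) = card ((\<lambda>x. (x, s)) ` L s) + card ((\<lambda>x. (s, x)) ` R s)"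
      unfolding X_def using fin that by (intro card_Un_disjoint) (auto simp: L_def R_def)
    then show ?thesis
      by (simp add: card_image inj_on_def)
  qed
  have outside: "nat \<bar>int (card {x\<in>A - S. x < s}) - int (card {y\<in>A - f ` S. y < f s})\<bar> \<le> card (X s)"
    if s: "s \<in> S" for s
  proof -
    have "bij_betw \<pi> {x\<in>A - S. \<pi> x < \<pi> s} {y\<in>A - f ` S. y < f s}"
      using restrict_in_perms_between[OF SA \<pi> \<pi>S] \<pi>S s
      unfolding perms_between_def bij_betw_def by (auto simp: inj_on_def image_iff)
    then have "card {x\<in>A - S. \<pi> x < \<pi> s} = card {y\<in>A - f ` S. y < f s}"
      by (rule bij_betw_same_card)
    moreover have "\<forall>x\<in>A - S. \<pi> x \<noteq> \<pi> s"
      using inj s SA unfolding inj_on_def by blast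
    ultimately show ?thesis
      using card_below_diff_le_crossings[of "A - S" s \<pi>] fin s card_X
      unfolding L_def R_def by simp
  qed
  have "inversions (\<lambda>i. if i \<in> S then i else \<pi> i) (A - S) = card ?IT"
    unfolding inversions_def by (rule arg_cong[where f = card]) auto
  moreover have "card (\<Union>s\<in>S. X s) = (\<Sum>s\<in>S. card (X s))"
    using finS finX by (intro card_UN_disjoint) (auto simp: X_def L_def R_def)
  moreover have "card (?IS \<union> ?IT \<union> (\<Union>s\<in>S. X s)) = card ?IS + card ?IT + card (\<Union>s\<in>S. X s)"
  proof -
    have "finite ?IS" "finite ?IT"
      by (rule finite_subset[of _ "A \<times> A"]; use fin SA in auto)+
    then show ?thesis
      using finS finX by (subst card_Un_disjoint, auto simp: X_def L_def R_def)+
  qed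
  moreover have "card (?IS \<union> ?IT \<union> (\<Union>s\<in>S. X s)) \<le> card ?Inv"
    by (rule card_mono)
      (use fin SA \<pi>S dec in \<open>auto intro: finite_subset[of _ "A \<times> A"] simp: X_def L_def R_def\<close>)
  ultimately show ?thesis
    using card_ordered_pairs[OF finS] sum_mono[of S _ "\<lambda>s. card (X s)", OF outside]
    unfolding inversions_def by linarith
qed

lemma sum_q_inversions_prescribed_le:
  fixes f :: "int \<Rightarrow> int" and q :: real
  assumes fin: "finite A" and SA: "S \<subseteq> A" and fSA: "f ` S \<subseteq> A"
    and dec: "\<forall>s\<in>S. \<forall>s'\<in>S. s < s' \<longrightarrow> f s' < f s" and q: "0 \<le> q" "q \<le> 1"
  shows "(\<Sum>\<pi>\<in>{\<pi>\<in>perms_between A A. \<forall>s\<in>S. \<pi> s = f s}. q ^ inversions \<pi> A)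
    \<le> q ^ ((card S choose 2)
            + (\<Sum>s\<in>S. nat \<bar>int (card {x\<in>A - S. x < s}) - int (card {y\<in>A - f ` S. y < f s})\<bar>))
      * q_factorial q (card A - card S)"
proof -
  let ?F = "{\<pi>\<in>perms_between A A. \<forall>s\<in>S. \<pi> s = f s}"
  let ?E = "(card S choose 2)
    + (\<Sum>s\<in>S. nat \<bar>int (card {x\<in>A - S. x < s}) - int (card {y\<in>A - f ` S. y < f s})\<bar>)"
  let ?res = "\<lambda>\<pi> i. if i \<in> S then i else \<pi> i"
  have finS: "finite S"
    using fin SA finite_subset by auto
  have "inj_on f S"
    using dec by (intro inj_onI) (metis less_irrefl neq_iff)
  then have card_fS: "card (A - f ` S) = card (A - S)"
    using finS SA fSA by (simp add: card_Diff_subset card_image)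
  have inj_res: "inj_on ?res ?F"
  proof (rule inj_onI)
    fix g h assume "g \<in> ?F" "h \<in> ?F" "?res g = ?res h"
    then show "g = h"
      by (auto simp: fun_eq_iff split: if_splits) metis
  qed
  have "(\<Sum>\<pi>\<in>?F. q ^ inversions \<pi> A) \<le> (\<Sum>\<pi>\<in>?F. q ^ ?E * q ^ inversions (?res \<pi>) (A - S))"
  proof (rule sum_mono)
    fix \<pi> assume "\<pi> \<in> ?F"
    then have "?E + inversions (?res \<pi>) (A - S) \<le> inversions \<pi> A"
      using inversions_prescribed_lower[OF fin SA _ _ dec] by auto
    then show "q ^ inversions \<pi> A \<le> q ^ ?E * q ^ inversions (?res \<pi>) (A - S)"
      using q by (simp add: power_add[symmetric] power_decreasing)
  qed
  also have "\<dots> = q ^ ?E * (\<Sum>\<rho>\<in>?res ` ?F. q ^ inversions \<rho> (A - S))"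
    by (simp add: sum_distrib_left sum.reindex[OF inj_res])
  also have "(\<Sum>\<rho>\<in>?res ` ?F. q ^ inversions \<rho> (A - S))
      \<le> (\<Sum>\<rho>\<in>perms_between (A - S) (A - f ` S). q ^ inversions \<rho> (A - S))"
    using restrict_in_perms_between[OF SA] fin q
    by (intro sum_mono2 finite_perms_between) auto
  also have "\<dots> = q_factorial q (card A - card S)"
    using fin finS SA card_fS by (simp add: sum_q_inversions_perms_between card_Diff_subset)
  finally show ?thesis
    using q by (simp add: mult_left_mono)
qed

text \<open>For the reflection \<open>f s = d - s\<close> the count differences in the previous bound depend only
  on \<open>S\<close> (\<open>card_below_reflection_diff\<close>); their sum is the displacement below, with
  \<open>h = card S - 1 - d\<close>. It vanishes exactly when \<open>S\<close> is an interval with \<open>min S + max S = d\<close>.\<close>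

definition displacement :: "int \<Rightarrow> int set \<Rightarrow> nat" where
  "displacement h S = (\<Sum>s\<in>S. nat \<bar>2 * s - 2 * int (card {x\<in>S. x < s}) + h\<bar>)"

lemma card_less_atLeastAtMost_int:
  fixes n s :: int
  assumes "- n \<le> s" "s \<le> n + 1"
  shows "card {x\<in>{- n..n}. x < s} = nat (s + n)"
proof -
  have "{x\<in>{- n..n}. x < s} = {- n..s - 1}"
    using assms by auto
  then show ?thesis by simp
qed

lemma card_below_reflection_diff:
  fixes n d s :: int
  assumes SA: "S \<subseteq> {- n..n}" and dSA: "(\<lambda>s. d - s) ` S \<subseteq> {- n..n}" and s: "s \<in> S"
  shows "int (card {x\<in>{- n..n} - S. x < s}) - int (card {y\<in>{- n..n} - (\<lambda>s. d - s) ` S. y < d - s})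
    = 2 * s - 2 * int (card {x\<in>S. x < s}) + (int (card S) - 1 - d)"
proof -
  let ?A = "{- n..n}"
  have finS: "finite S"
    using SA finite_subset by blast
  have sA: "s \<in> ?A" and dsA: "d - s \<in> ?A"
    using SA dSA s by auto
  have "{y\<in>(\<lambda>s. d - s) ` S. y < d - s} = (\<lambda>s. d - s) ` {x\<in>S. s < x}"
    by auto
  then have above: "card {y\<in>(\<lambda>s. d - s) ` S. y < d - s} = card {x\<in>S. s < x}"
    by (simp add: card_image inj_on_def)
  have card_diff: "card (X - Y) = card X - card Y" "card Y \<le> card X"
    if "Y \<subseteq> X" "X \<subseteq> ?A" for Y X
    using that card_mono[OF finite_subset[OF that(2)] that(1)] finite_subset[of Y ?A]
    by (auto simp: card_Diff_subset)
  have "{x\<in>?A - S. x < s} = {x\<in>?A. x < s} - {x\<in>S. x < s}"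
    by blast
  moreover have "card {x\<in>?A. x < s} = nat (s + n)"
    using sA by (intro card_less_atLeastAtMost_int) auto
  moreover have "{x\<in>S. x < s} \<subseteq> {x\<in>?A. x < s}" "{x\<in>?A. x < s} \<subseteq> ?A"
    using SA by auto
  ultimately have below_s: "int (card {x\<in>?A - S. x < s}) = (s + n) - int (card {x\<in>S. x < s})"
    using card_diff[of "{x\<in>S. x < s}" "{x\<in>?A. x < s}"] sA by (simp add: of_nat_diff)
  have "{y\<in>?A - (\<lambda>s. d - s) ` S. y < d - s} = {y\<in>?A. y < d - s} - {y\<in>(\<lambda>s. d - s) ` S. y < d - s}"
    by blast
  moreover have "card {y\<in>?A. y < d - s} = nat (d - s + n)"
    using dsA by (intro card_less_atLeastAtMost_int) auto
  ultimately have below_ds: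
    "int (card {y\<in>?A - (\<lambda>s. d - s) ` S. y < d - s}) = (d - s + n) - int (card {x\<in>S. s < x})"
    using card_diff[of "{y\<in>(\<lambda>s. d - s) ` S. y < d - s}" "{y\<in>?A. y < d - s}"] dSA dsA above
    by (simp add: of_nat_diff subset_iff)
  have "S = {x\<in>S. x < s} \<union> ({s} \<union> {x\<in>S. s < x})"
    using s by auto
  then have "card S = card ({x\<in>S. x < s} \<union> ({s} \<union> {x\<in>S. s < x}))"
    by (rule arg_cong)
  also have "\<dots> = card {x\<in>S. x < s} + card ({s} \<union> {x\<in>S. s < x})"
    by (rule card_Un_disjoint) (use finS in auto)
  also have "card ({s} \<union> {x\<in>S. s < x}) = 1 + card {x\<in>S. s < x}"
    using finS by (subst card_Un_disjoint) auto
  finally have "card S = card {x\<in>S. x < s} + 1 + card {x\<in>S. s < x}"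
    by simp
  then show ?thesis
    using below_s below_ds by linarith
qed

lemma sum_q_inversions_reflecting_le:
  fixes n d :: int and q :: real
  assumes SA: "S \<subseteq> {- n..n}" and dSA: "(\<lambda>s. d - s) ` S \<subseteq> {- n..n}" and q: "0 \<le> q" "q \<le> 1"
  shows "(\<Sum>\<pi>\<in>{\<pi>\<in>perms_of {- n..n}. \<forall>s\<in>S. \<pi> s = d - s}. q ^ inversions \<pi> {- n..n})
    \<le> q ^ ((card S choose 2) + displacement (int (card S) - 1 - d) S)
      * q_factorial q (card {- n..n} - card S)"
proof -
  have "(\<Sum>s\<in>S. nat \<bar>int (card {x\<in>{- n..n} - S. x < s})
        - int (card {y\<in>{- n..n} - (\<lambda>s. d - s) ` S. y < d - s})\<bar>)
      = displacement (int (card S) - 1 - d) S"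
    unfolding displacement_def using card_below_reflection_diff[OF SA dSA] by simp
  then show ?thesis
    using sum_q_inversions_prescribed_le[OF finite_atLeastAtMost_int SA dSA _ q]
    unfolding perms_of_eq_perms_between by simp
qed

section \<open>Products of geometric series\<close>

fun inv_qpochhammer :: "real \<Rightarrow> nat \<Rightarrow> real" where
  "inv_qpochhammer y 0 = 1"
| "inv_qpochhammer y (Suc a) = inv_qpochhammer y a / (1 - y ^ Suc a)"

definition euler_bound :: "real \<Rightarrow> real" where
  "euler_bound y = exp (y / (1 - y) / (1 - y))"

lemma mult_power_less_one: "0 \<le> y \<Longrightarrow> y < 1 \<Longrightarrow> y * y ^ k < 1"
  for y :: real
  using power_less_one_iff[of y "Suc k"] by simp

lemma sum_power_lessThan_le: "0 \<le> q \<Longrightarrow> q < 1 \<Longrightarrow> (\<Sum>j<n. q ^ j) \<le> 1 / (1 - q)"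
  for q :: real
  by (simp add: sum_gp_strict divide_right_mono)

lemma inv_qpochhammer_pos: "0 \<le> y \<Longrightarrow> y < 1 \<Longrightarrow> 0 < inv_qpochhammer y a"
  by (induction a) (use mult_power_less_one[of y] in auto)

lemma inverse_one_minus_le_exp:
  fixes t y :: real
  assumes "0 \<le> t" "t \<le> y" "y < 1"
  shows "1 / (1 - t) \<le> exp (t / (1 - y))"
proof -
  have "1 / (1 - t) = 1 + t / (1 - t)"
    using assms by (simp add: field_simps)
  also have "\<dots> \<le> exp (t / (1 - t))"
    using assms by (intro exp_ge_add_one_self_aux) auto
  also have "\<dots> \<le> exp (t / (1 - y))"
    using assms by (simp add: divide_left_mono)
  finally show ?thesis .
qed

lemma inv_qpochhammer_le_euler_bound:
  assumes y: "0 \<le> y" "y < 1"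
  shows "inv_qpochhammer y a \<le> euler_bound y"
proof -
  have "inv_qpochhammer y a \<le> exp ((\<Sum>i\<in>{1..a}. y ^ i) / (1 - y))"
  proof (induction a)
    case (Suc a)
    have "0 \<le> y ^ Suc a" "y ^ Suc a \<le> y"
      using y power_decreasing[of 1 "Suc a" y] by auto
    then have "inv_qpochhammer y (Suc a) \<le> exp ((\<Sum>i\<in>{1..a}. y ^ i) / (1 - y)) * exp (y ^ Suc a / (1 - y))"
      using Suc inverse_one_minus_le_exp[of "y ^ Suc a" y] inv_qpochhammer_pos[OF y, of a] y
      by (simp only: inv_qpochhammer.simps divide_inverse) (intro mult_mono, auto simp: field_simps)
    then show ?case
      by (simp add: exp_add[symmetric] add_divide_distrib)
  qed simp
  also have "(\<Sum>i\<in>{1..a}. y ^ i) = y * (\<Sum>i<a. y ^ i)"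
    by (induction a) (simp_all add: distrib_left)
  also have "\<dots> \<le> y * (1 / (1 - y))"
    using y sum_power_lessThan_le[OF y] by (intro mult_left_mono)
  also have "\<dots> = y / (1 - y)"
    by simp
  finally show ?thesis
    unfolding euler_bound_def using y by (simp add: divide_right_mono)
qed

lemma euler_bound_ge_1: "0 \<le> y \<Longrightarrow> y < 1 \<Longrightarrow> 1 \<le> euler_bound y"
  unfolding euler_bound_def by simp

lemma q_factorial_pos: "0 \<le> q \<Longrightarrow> 0 < q_factorial q n"
proof (induction n)
  case (Suc n)
  have "1 \<le> (\<Sum>j<Suc n. q ^ j)"
    using Suc.prems by (subst sum.lessThan_Suc_shift) (simp add: sum_nonneg)
  then show ?case
    using Suc by (simp only: q_factorial.simps) (intro mult_pos_pos; simp)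
qed simp

lemma q_factorial_le:
  assumes q: "0 \<le> q" "q < 1"
  shows "q_factorial q n \<le> (1 / (1 - q)) ^ n"
proof (induction n)
  case (Suc n)
  have "(\<Sum>j<Suc n. q ^ j) \<le> 1 / (1 - q)"
    using q by (rule sum_power_lessThan_le)
  then show ?case
    using Suc q_factorial_pos[OF q(1), of n] q
    by (simp only: q_factorial.simps power_Suc2) (intro mult_mono sum_nonneg, auto)
qed simp

lemma q_factorial_inv_qpochhammer:
  assumes q: "0 \<le> q" "q < 1"
  shows "q_factorial q n * (1 - q) ^ n * inv_qpochhammer q n = 1"
proof (induction n)
  case (Suc n)
  have nz: "1 - q ^ Suc n \<noteq> 0"
    using q mult_power_less_one[of q n] by simp
  have "(\<Sum>j<Suc n. q ^ j) = (1 - q ^ Suc n) / (1 - q)"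
    using q by (subst sum_gp_strict) auto
  then have geom: "(\<Sum>j<Suc n. q ^ j) * (1 - q) = 1 - q ^ Suc n"
    using q by simp
  have "q_factorial q (Suc n) * (1 - q) ^ Suc n * inv_qpochhammer q (Suc n)
      = (q_factorial q n * (1 - q) ^ n * inv_qpochhammer q n) * ((\<Sum>j<Suc n. q ^ j) * (1 - q))
        / (1 - q ^ Suc n)"
    by (simp add: field_simps)
  also have "\<dots> = 1"
    using Suc geom nz by simp
  finally show ?case .
qed simp

lemma q_factorial_ge:
  assumes q: "0 \<le> q" "q < 1"
  shows "(1 / (1 - q)) ^ n / euler_bound q \<le> q_factorial q n"
proof -
  have pos: "0 < inv_qpochhammer q n" "0 < (1 - q) ^ n"
    using inv_qpochhammer_pos[OF q] q by auto
  then have "(1 - q) ^ n * inv_qpochhammer q n \<noteq> 0"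
    by (metis less_irrefl mult_pos_pos)
  moreover have "q_factorial q n * ((1 - q) ^ n * inv_qpochhammer q n) = 1"
    using q_factorial_inv_qpochhammer[OF q, of n] by (simp add: mult.assoc)
  ultimately have "q_factorial q n = 1 / ((1 - q) ^ n * inv_qpochhammer q n)"
    by (simp add: eq_divide_eq)
  also have "\<dots> = (1 / (1 - q)) ^ n / inv_qpochhammer q n"
    by (simp add: power_one_over)
  finally have "q_factorial q n = (1 / (1 - q)) ^ n / inv_qpochhammer q n" .
  moreover have "(1 / (1 - q)) ^ n / euler_bound q \<le> (1 / (1 - q)) ^ n / inv_qpochhammer q n"
    using pos q inv_qpochhammer_le_euler_bound[OF q] euler_bound_ge_1[OF q]
    by (intro divide_left_mono) auto
  ultimately show ?thesis
    by simp
qed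

lemma q_factorial_ratio_ge:
  assumes q: "0 \<le> q" "q < 1"
  shows "(1 - q) ^ K / euler_bound q ^ 2
    \<le> q_factorial q l * q_factorial q r / q_factorial q (l + K + r)"
proof -
  let ?t = "1 / (1 - q)"
  have t: "0 < ?t" and E: "0 < euler_bound q"
    using q euler_bound_ge_1[OF q] by auto
  have "(1 - q) ^ K / euler_bound q ^ 2
      = (?t ^ l / euler_bound q) * (?t ^ r / euler_bound q) / ?t ^ (l + K + r)"
    using q E by (simp add: power_add field_simps power2_eq_square)
  also have "\<dots> \<le> q_factorial q l * q_factorial q r / ?t ^ (l + K + r)"
    using q_factorial_ge[OF q] q_factorial_pos[OF q(1)] t E
    by (intro divide_right_mono mult_mono) (auto intro: less_imp_le)
  also have "\<dots> \<le> q_factorial q l * q_factorial q r / q_factorial q (l + K + r)"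
    using q_factorial_le[OF q] q_factorial_pos q t
    by (intro divide_left_mono mult_nonneg_nonneg mult_pos_pos) (auto intro: less_imp_le)
  finally show ?thesis .
qed

lemma q_factorial_ratio_le:
  assumes q: "0 \<le> q" "q < 1" and "K \<le> N"
  shows "q_factorial q (N - K) / q_factorial q N \<le> (1 - q) ^ K * euler_bound q"
proof -
  let ?t = "1 / (1 - q)"
  have t: "0 < ?t" and E: "0 < euler_bound q"
    using q euler_bound_ge_1[OF q] by auto
  have "q_factorial q (N - K) / q_factorial q N \<le> ?t ^ (N - K) / (?t ^ N / euler_bound q)"
    using q_factorial_le[OF q] q_factorial_ge[OF q] q_factorial_pos q t E by (intro frac_le) auto
  also have "?t ^ N = ?t ^ (N - K) * ?t ^ K"
    using assms(3) by (simp add: power_add[symmetric])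
  finally show ?thesis
    using q E by (simp add: field_simps power_one_over)
qed

text \<open>\<open>gauss_binomial y a m\<close> is the Gaussian binomial coefficient \<open>[m + a choose a]\<close> in \<open>y\<close>.\<close>

fun gauss_binomial :: "real \<Rightarrow> nat \<Rightarrow> nat \<Rightarrow> real" where
  "gauss_binomial y 0 m = 1"
| "gauss_binomial y (Suc a) m = gauss_binomial y a m * (1 - y ^ (m + a + 1)) / (1 - y ^ (a + 1))"

lemma gauss_binomial_nonneg: "0 \<le> y \<Longrightarrow> y < 1 \<Longrightarrow> 0 \<le> gauss_binomial y a m"
proof (induction a)
  case (Suc a)
  then show ?case
    using mult_power_less_one[of y "m + a"] mult_power_less_one[of y a]
    by (auto intro!: divide_nonneg_nonneg mult_nonneg_nonneg)
qed simp

lemma gauss_binomial_le_inv_qpochhammer: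
  assumes y: "0 \<le> y" "y < 1"
  shows "gauss_binomial y a m \<le> inv_qpochhammer y a"
proof (induction a)
  case (Suc a)
  have "gauss_binomial y a m * (1 - y ^ (m + a + 1)) \<le> inv_qpochhammer y a * 1"
    using Suc y gauss_binomial_nonneg[OF y, of a m] inv_qpochhammer_pos[OF y, of a]
      mult_power_less_one[OF y, of "m + a"]
    by (intro mult_mono) auto
  then show ?case
    using y mult_power_less_one[of y a] by (simp add: divide_right_mono)
qed simp

lemma gauss_binomial_0_right: "0 \<le> y \<Longrightarrow> y < 1 \<Longrightarrow> gauss_binomial y a 0 = 1"
proof (induction a)
  case (Suc a)
  then show ?case
    using mult_power_less_one[of y a] by simp
qed simp

lemma gauss_binomial_shift:
  assumes y: "0 \<le> y" "y < 1"
  shows "gauss_binomial y a (m + 1) * (1 - y ^ (m + 1)) = gauss_binomial y a m * (1 - y ^ (m + a + 1))"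
proof (induction a)
  case (Suc a)
  have "gauss_binomial y (Suc a) (m + 1) * (1 - y ^ (m + 1))
      = gauss_binomial y a (m + 1) * (1 - y ^ (m + 1)) * (1 - y ^ (m + 1 + a + 1)) / (1 - y ^ (a + 1))"
    by simp
  also have "\<dots> = gauss_binomial y a m * (1 - y ^ (m + a + 1)) * (1 - y ^ (m + 1 + a + 1))
      / (1 - y ^ (a + 1))"
    using Suc by simp
  also have "\<dots> = gauss_binomial y (Suc a) m * (1 - y ^ (m + Suc a + 1))"
    by (simp add: field_simps)
  finally show ?case .
qed simp

lemma gauss_binomial_pascal:
  assumes y: "0 \<le> y" "y < 1"
  shows "gauss_binomial y (a + 1) (m + 1)
    = gauss_binomial y (a + 1) m + y ^ (m + 1) * gauss_binomial y a (m + 1)"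
proof -
  have nz: "1 - y ^ (a + 1) \<noteq> 0" "1 - y ^ (m + 1) \<noteq> 0"
    using mult_power_less_one[OF y, of a] mult_power_less_one[OF y, of m] by auto
  have "gauss_binomial y a m * (1 - y ^ (m + a + 1)) = gauss_binomial y a (m + 1) * (1 - y ^ (m + 1))"
    using gauss_binomial_shift[OF y] by simp
  then have "gauss_binomial y (a + 1) m = gauss_binomial y a (m + 1) * (1 - y ^ (m + 1)) / (1 - y ^ (a + 1))"
    by simp
  moreover have "gauss_binomial y (a + 1) (m + 1)
      = gauss_binomial y a (m + 1) * (1 - y ^ (m + 1 + a + 1)) / (1 - y ^ (a + 1))"
    by simp
  ultimately show ?thesis
    using nz by (simp add: field_simps power_add)
qed

lemma sum_gauss_binomial:
  assumes "0 \<le> y" "y < 1"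
  shows "(\<Sum>i\<le>m. y ^ i * gauss_binomial y a i) = gauss_binomial y (a + 1) m"
proof (induction m)
  case 0
  show ?case
    using gauss_binomial_0_right[OF assms, of a] gauss_binomial_0_right[OF assms, of "a + 1"] by simp
next
  case (Suc m)
  then show ?case
    using gauss_binomial_pascal[OF assms, of a m] by simp
qed

section \<open>Summing the displacement weight over subsets\<close>

definition ksubsets :: "int \<Rightarrow> int \<Rightarrow> nat \<Rightarrow> int set set" where
  "ksubsets L U K = {S. S \<subseteq> {L..U} \<and> card S = K}"

lemma finite_ksubsets: "finite (ksubsets L U K)"
  unfolding ksubsets_def by (rule finite_subset[of _ "Pow {L..U}"]) auto

lemma finite_of_ksubsets: "S \<in> ksubsets L U K \<Longrightarrow> finite S"
  unfolding ksubsets_def by (auto intro: finite_subset)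

lemma ksubsets_0: "ksubsets L U 0 = {{}}"
proof -
  have "S = {}" if "S \<subseteq> {L..U}" "card S = 0" for S
    using that finite_subset[OF that(1)] by auto
  then show ?thesis unfolding ksubsets_def by auto
qed

lemma ksubsets_Suc:
  "ksubsets L U (Suc K) = (\<Union>s\<in>{L..U}. insert s ` ksubsets (s+1) U K)"
proof
  show "ksubsets L U (Suc K) \<subseteq> (\<Union>s\<in>{L..U}. insert s ` ksubsets (s+1) U K)"
  proof
    fix S assume S: "S \<in> ksubsets L U (Suc K)"
    then have sub: "S \<subseteq> {L..U}" and c: "card S = Suc K" unfolding ksubsets_def by auto
    have fin: "finite S" using sub by (rule finite_subset) simp
    have ne: "S \<noteq> {}" using c by auto
    define s where "s = Min S"
    have s: "s \<in> S" "\<forall>x\<in>S. s \<le> x" using fin ne unfolding s_def by auto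
    have "S - {s} \<in> ksubsets (s+1) U K"
    proof -
      have "S - {s} \<subseteq> {s+1..U}"
      proof
        fix y assume y: "y \<in> S - {s}"
        then have "s < y" using s by force
        then show "y \<in> {s+1..U}" using y sub by auto
      qed
      moreover have "card (S - {s}) = K" using c s fin by simp
      ultimately show ?thesis unfolding ksubsets_def by simp
    qed
    moreover have "S = insert s (S - {s})" using s by auto
    moreover have "s \<in> {L..U}" using s sub by auto
    ultimately show "S \<in> (\<Union>s\<in>{L..U}. insert s ` ksubsets (s+1) U K)" by blast
  qed
next
  show "(\<Union>s\<in>{L..U}. insert s ` ksubsets (s+1) U K) \<subseteq> ksubsets L U (Suc K)"
  proof clarify
    fix s S' assume s: "s \<in> {L..U}" and S': "S' \<in> ksubsets (s+1) U K"
    then have sub: "S' \<subseteq> {s+1..U}" and c: "card S' = K" unfolding ksubsets_def by auto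
    have fin: "finite S'" using sub by (rule finite_subset) simp
    have "s \<notin> S'" using sub by auto
    then show "insert s S' \<in> ksubsets L U (Suc K)" unfolding ksubsets_def using s sub c fin by auto
  qed
qed

lemma displacement_empty: "displacement h {} = 0"
  unfolding displacement_def by simp

lemma displacement_insert_min:
  assumes fin: "finite S" and s: "s \<notin> S" and lt: "\<forall>t\<in>S. s < t"
  shows "displacement h (insert s S) = nat \<bar>2 * s + h\<bar> + displacement (h - 2) S"
proof -
  have c0: "card {x\<in>insert s S. x < s} = 0"
    using lt fin by auto
  have c1: "card {x\<in>insert s S. x < t} = card {x\<in>S. x < t} + 1" if t: "t \<in> S" for t
  proof -
    have "{x\<in>insert s S. x < t} = insert s {x\<in>S. x < t}"
      using lt t by auto
    then show ?thesis
      using fin s by simp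
  qed
  have "displacement h (insert s S) = nat \<bar>2 * s - 2 * int (card {x\<in>insert s S. x < s}) + h\<bar>
      + (\<Sum>t\<in>S. nat \<bar>2 * t - 2 * int (card {x\<in>insert s S. x < t}) + h\<bar>)"
    unfolding displacement_def using fin s by simp
  also have "(\<Sum>t\<in>S. nat \<bar>2 * t - 2 * int (card {x\<in>insert s S. x < t}) + h\<bar>) = displacement (h - 2) S"
    unfolding displacement_def
  proof (rule sum.cong[OF refl])
    fix t assume t: "t \<in> S"
    show "nat \<bar>2 * t - 2 * int (card {x\<in>insert s S. x < t}) + h\<bar>
        = nat \<bar>2 * t - 2 * int (card {x\<in>S. x < t}) + (h - 2)\<bar>"
      unfolding c1[OF t] by (simp add: algebra_simps)
  qed
  finally show ?thesis
    using c0 by simp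
qed

lemma sum_ksubsets_Suc_displacement:
  fixes x :: real
  shows "(\<Sum>S\<in>ksubsets L U (Suc K). x ^ displacement h S)
    = (\<Sum>s\<in>{L..U}. x ^ nat \<bar>2 * s + h\<bar> * (\<Sum>S\<in>ksubsets (s + 1) U K. x ^ displacement (h - 2) S))"
proof -
  let ?T = "\<lambda>s. ksubsets (s + 1) U K"
  have notin: "s \<notin> S" and lt: "\<forall>t\<in>S. s < t" if "S \<in> ?T s" for s S
    using that unfolding ksubsets_def by auto
  have "(\<Sum>S\<in>ksubsets L U (Suc K). x ^ displacement h S)
      = (\<Sum>s\<in>{L..U}. \<Sum>S\<in>insert s ` ?T s. x ^ displacement h S)"
    unfolding ksubsets_Suc
  proof (rule sum.UNION_disjoint)
    have "s \<le> t" if "T \<in> insert s ` ?T s" "T \<in> insert t ` ?T t" for s t T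
      using that lt by force
    then show "\<forall>s\<in>{L..U}. \<forall>t\<in>{L..U}. s \<noteq> t \<longrightarrow> insert s ` ?T s \<inter> insert t ` ?T t = {}"
      by (meson disjoint_iff order_antisym)
  qed (auto intro: finite_ksubsets)
  also have "\<dots> = (\<Sum>s\<in>{L..U}. x ^ nat \<bar>2 * s + h\<bar> * (\<Sum>S\<in>?T s. x ^ displacement (h - 2) S))"
  proof (rule sum.cong[OF refl])
    fix s
    have inj: "inj_on (insert s) (?T s)"
    proof (rule inj_onI)
      fix A B assume "A \<in> ?T s" "B \<in> ?T s" "insert s A = insert s B"
      then show "A = B"
        using notin by (metis Diff_insert_absorb)
    qed
    show "(\<Sum>S\<in>insert s ` ?T s. x ^ displacement h S)
        = x ^ nat \<bar>2 * s + h\<bar> * (\<Sum>S\<in>?T s. x ^ displacement (h - 2) S)"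
      by (simp add: sum.reindex[OF inj] sum_distrib_left power_add
          displacement_insert_min[OF finite_of_ksubsets notin lt])
  qed
  finally show ?thesis .
qed

text \<open>An explicit majorant \<open>G\<^sub>K(z)\<close> of the sums \<open>\<Sum>S. x ^ displacement h S\<close> over the
  \<open>K\<close>-subsets of \<open>{L..U}\<close>, where \<open>z = 2 L + h\<close>. Splitting off the least element of \<open>S\<close>
  shows that it suffices to have
  \<open>\<Sum>j. x ^ \<bar>z + 2 j\<bar> * G\<^sub>K(z + 2 j) \<le> G\<^sub>K\<^sub>+\<^sub>1(z)\<close>; for odd \<open>z\<close> the geometric series for \<open>z > 0\<close>
  and the Gaussian binomial sums for \<open>z < 0\<close> give this one.\<close>

definition subset_weight_bound :: "real \<Rightarrow> nat \<Rightarrow> int \<Rightarrow> real" where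
  "subset_weight_bound x K z =
    (if 1 \<le> z then x ^ (K * nat z) * inv_qpochhammer (x\<^sup>2) K
     else x ^ K * (\<Sum>a\<le>K. gauss_binomial (x\<^sup>2) a (nat ((- 1 - z) div 2)) * inv_qpochhammer (x\<^sup>2) (K - a)))"

lemma subset_weight_bound_nonneg:
  assumes "0 \<le> x" "x < 1"
  shows "0 \<le> subset_weight_bound x K z"
proof -
  have y: "0 \<le> x^2" "x^2 < 1" using assms by (auto simp: power_less_one_iff)
  have A: "\<And>a. 0 \<le> inv_qpochhammer (x^2) a" using inv_qpochhammer_pos[OF y] less_imp_le by blast
  show ?thesis unfolding subset_weight_bound_def
    using A gauss_binomial_nonneg[OF y] assms by (auto intro!: sum_nonneg mult_nonneg_nonneg)
qed

lemma sum_subset_weight_bound_pos: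
  assumes x: "0 \<le> x" "x < 1" and z: "1 \<le> z"
  shows "(\<Sum>j<n. x ^ nat \<bar>z + 2 * int j\<bar> * subset_weight_bound x K (z + 2 * int j))
    \<le> subset_weight_bound x (K + 1) z"
proof -
  have y: "0 \<le> x\<^sup>2" "x\<^sup>2 < 1"
    using x by (auto simp: power_less_one_iff)
  let ?r = "(x\<^sup>2) ^ (K + 1)" and ?c = "inv_qpochhammer (x\<^sup>2) K * x ^ ((K + 1) * nat z)"
  have r: "0 \<le> ?r" "?r < 1"
    using y power_less_one_iff[of "x\<^sup>2" "K + 1"] by auto
  have summand: "x ^ nat \<bar>z + 2 * int j\<bar> * subset_weight_bound x K (z + 2 * int j) = ?c * ?r ^ j" for j
  proof -
    have "nat \<bar>z + 2 * int j\<bar> = nat z + 2 * j" "nat (z + 2 * int j) = nat z + 2 * j"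
      using z by auto
    moreover have "x ^ (nat z + 2 * j) * (x ^ (K * (nat z + 2 * j))) = x ^ ((K + 1) * nat z) * ?r ^ j"
      by (simp add: power_add[symmetric] power_mult[symmetric] algebra_simps)
    ultimately show ?thesis
      unfolding subset_weight_bound_def using z by (simp add: algebra_simps)
  qed
  have "(\<Sum>j<n. x ^ nat \<bar>z + 2 * int j\<bar> * subset_weight_bound x K (z + 2 * int j)) = ?c * (\<Sum>j<n. ?r ^ j)"
    by (simp add: summand sum_distrib_left)
  also have "(\<Sum>j<n. ?r ^ j) = (1 - ?r ^ n) / (1 - ?r)"
    using r by (simp add: sum_gp_strict)
  also have "\<dots> \<le> 1 / (1 - ?r)"
    using r by (intro divide_right_mono) auto
  finally have "(\<Sum>j<n. x ^ nat \<bar>z + 2 * int j\<bar> * subset_weight_bound x K (z + 2 * int j))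
      \<le> ?c * (1 / (1 - ?r))"
    using inv_qpochhammer_pos[OF y, of K] x by (simp add: mult_left_mono)
  also have "\<dots> = subset_weight_bound x (K + 1) z"
    unfolding subset_weight_bound_def using z by (simp add: algebra_simps)
  finally show ?thesis .
qed

lemma sum_lessThan_add_split: "(\<Sum>j<a + b. f j) = (\<Sum>j<a. f j) + (\<Sum>j<b. f (j + a))"
  for f :: "nat \<Rightarrow> real"
  by (induction b) (auto simp: add.commute)

lemma sum_lessThan_split_le:
  fixes f :: "nat \<Rightarrow> real"
  assumes nn: "\<And>j. 0 \<le> f j"
  shows "(\<Sum>j<n. f j) \<le> (\<Sum>j<a. f j) + (\<Sum>j<n - a. f (j + a))"
proof (cases "n \<le> a")
  case True
  have "(\<Sum>j<n. f j) \<le> (\<Sum>j<a. f j)"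
    using True nn by (intro sum_mono2) auto
  moreover have "0 \<le> (\<Sum>j<n - a. f (j + a))"
    using nn by (intro sum_nonneg) auto
  ultimately show ?thesis
    by linarith
next
  case False
  then have "(\<Sum>j<n. f j) = (\<Sum>j<a + (n - a). f j)"
    by simp
  also have "\<dots> = (\<Sum>j<a. f j) + (\<Sum>j<n - a. f (j + a))"
    by (rule sum_lessThan_add_split)
  finally show ?thesis
    by simp
qed

lemma subset_weight_bound_neg_odd:
  "subset_weight_bound x K (- (2 * int m + 1))
    = x ^ K * (\<Sum>a\<le>K. gauss_binomial (x\<^sup>2) a m * inv_qpochhammer (x\<^sup>2) (K - a))"
  unfolding subset_weight_bound_def by simp

lemma subset_weight_bound_Suc_neg_odd:
  "subset_weight_bound x (K + 1) (- (2 * int m + 1))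
    = x ^ (K + 1) * (\<Sum>a\<le>K. inv_qpochhammer (x\<^sup>2) (K - a) * gauss_binomial (x\<^sup>2) (a + 1) m)
      + subset_weight_bound x (K + 1) 1"
proof -
  have "subset_weight_bound x (K + 1) (- (2 * int m + 1))
      = x ^ (K + 1) * (gauss_binomial (x\<^sup>2) 0 m * inv_qpochhammer (x\<^sup>2) (Suc K)
        + (\<Sum>a\<le>K. gauss_binomial (x\<^sup>2) (Suc a) m * inv_qpochhammer (x\<^sup>2) (K - a)))"
    unfolding subset_weight_bound_neg_odd
    by (simp only: Suc_eq_plus1[symmetric] sum.atMost_Suc_shift diff_Suc_Suc diff_zero)
  then show ?thesis
    unfolding subset_weight_bound_def by (simp add: algebra_simps)
qed

lemma sum_subset_weight_bound_neg_odd_head: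
  assumes x: "0 \<le> x" "x < 1"
  shows "(\<Sum>i\<le>m. x ^ (2 * i + 1) * subset_weight_bound x K (- (2 * int i + 1)))
    = x ^ (K + 1) * (\<Sum>a\<le>K. inv_qpochhammer (x\<^sup>2) (K - a) * gauss_binomial (x\<^sup>2) (a + 1) m)"
proof -
  have y: "0 \<le> x\<^sup>2" "x\<^sup>2 < 1"
    using x by (auto simp: power_less_one_iff)
  have "x ^ (2 * i + 1) * subset_weight_bound x K (- (2 * int i + 1))
      = (\<Sum>a\<le>K. x ^ (K + 1) * (inv_qpochhammer (x\<^sup>2) (K - a) * ((x\<^sup>2) ^ i * gauss_binomial (x\<^sup>2) a i)))" for i
  proof -
    have pow: "x ^ (2 * i + 1) * x ^ K = x ^ (K + 1) * (x\<^sup>2) ^ i"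
      by (simp add: power_add[symmetric] power_mult[symmetric] algebra_simps)
    have "x ^ (2 * i + 1) * subset_weight_bound x K (- (2 * int i + 1))
        = x ^ (K + 1) * (x\<^sup>2) ^ i * (\<Sum>a\<le>K. gauss_binomial (x\<^sup>2) a i * inv_qpochhammer (x\<^sup>2) (K - a))"
      unfolding subset_weight_bound_neg_odd mult.assoc[symmetric] pow ..
    then show ?thesis
      by (simp add: sum_distrib_left algebra_simps)
  qed
  then have "(\<Sum>i\<le>m. x ^ (2 * i + 1) * subset_weight_bound x K (- (2 * int i + 1)))
      = (\<Sum>i\<le>m. \<Sum>a\<le>K. x ^ (K + 1) * (inv_qpochhammer (x\<^sup>2) (K - a) * ((x\<^sup>2) ^ i * gauss_binomial (x\<^sup>2) a i)))"
    by simp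
  also have "\<dots> = x ^ (K + 1) * (\<Sum>a\<le>K. inv_qpochhammer (x\<^sup>2) (K - a)
      * (\<Sum>i\<le>m. (x\<^sup>2) ^ i * gauss_binomial (x\<^sup>2) a i))"
    by (subst sum.swap) (simp add: sum_distrib_left)
  finally show ?thesis
    by (simp add: sum_gauss_binomial[OF y])
qed

lemma sum_subset_weight_bound_neg_odd:
  assumes x: "0 \<le> x" "x < 1" and z: "z = - (2 * int m + 1)"
  shows "(\<Sum>j<n. x ^ nat \<bar>z + 2 * int j\<bar> * subset_weight_bound x K (z + 2 * int j))
    \<le> subset_weight_bound x (K + 1) z"
proof -
  define f where "f j = x ^ nat \<bar>z + 2 * int j\<bar> * subset_weight_bound x K (z + 2 * int j)" for j
  have "(\<Sum>j<n. f j) \<le> (\<Sum>j<m + 1. f j) + (\<Sum>j<n - (m + 1). f (j + (m + 1)))"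
    using subset_weight_bound_nonneg[OF x] x by (intro sum_lessThan_split_le) (simp add: f_def)
  also have "(\<Sum>j<n - (m + 1). f (j + (m + 1))) \<le> subset_weight_bound x (K + 1) 1"
  proof -
    have "z + 2 * int (j + (m + 1)) = 1 + 2 * int j" for j
      using z by simp
    then have "f (j + (m + 1)) = x ^ nat \<bar>1 + 2 * int j\<bar> * subset_weight_bound x K (1 + 2 * int j)" for j
      unfolding f_def by presburger
    then show ?thesis
      using sum_subset_weight_bound_pos[OF x, where z = 1 and n = "n - (m + 1)" and K = K] by simp
  qed
  also have "(\<Sum>j<m + 1. f j) = (\<Sum>i\<le>m. x ^ (2 * i + 1) * subset_weight_bound x K (- (2 * int i + 1)))"
  proof -
    have "f (m - i) = x ^ (2 * i + 1) * subset_weight_bound x K (- (2 * int i + 1))" if "i \<le> m" for i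
    proof -
      have "z + 2 * int (m - i) = - (2 * int i + 1)"
        using z that by auto
      moreover have "nat \<bar>- (2 * int i + 1)\<bar> = 2 * i + 1"
        by simp
      ultimately show ?thesis
        unfolding f_def by (simp only:)
    qed
    then show ?thesis
      using sum.nat_diff_reindex[of f "m + 1"] by (simp add: lessThan_Suc_atMost)
  qed
  finally show ?thesis
    using sum_subset_weight_bound_neg_odd_head[OF x] subset_weight_bound_Suc_neg_odd z
    by (simp add: f_def)
qed

lemma sum_subset_weight_bound_odd:
  assumes x: "0 \<le> x" "x < 1" and z: "odd z"
  shows "(\<Sum>j<n. x ^ nat \<bar>z + 2 * int j\<bar> * subset_weight_bound x K (z + 2 * int j))
    \<le> subset_weight_bound x (K + 1) z"
proof (cases "1 \<le> z")
  case True
  then show ?thesis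
    by (rule sum_subset_weight_bound_pos[OF x])
next
  case False
  then have "z = - (2 * int (nat ((- 1 - z) div 2)) + 1)"
    using z by (auto elim!: oddE)
  then show ?thesis
    by (rule sum_subset_weight_bound_neg_odd[OF x])
qed

lemma sum_atLeastAtMost_int_shift:
  fixes g :: "int \<Rightarrow> real"
  shows "(\<Sum>s\<in>{L..U}. g s) = (\<Sum>j<nat (U - L + 1). g (L + int j))"
proof -
  have inj: "inj_on (\<lambda>j. L + int j) {..<nat (U - L + 1)}" by (auto simp: inj_on_def)
  have img: "(\<lambda>j. L + int j) ` {..<nat (U - L + 1)} = {L..U}"
  proof
    show "(\<lambda>j. L + int j) ` {..<nat (U - L + 1)} \<subseteq> {L..U}" by auto
    show "{L..U} \<subseteq> (\<lambda>j. L + int j) ` {..<nat (U - L + 1)}"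
    proof
      fix s assume "s \<in> {L..U}"
      then have "s = L + int (nat (s - L))" "nat (s - L) < nat (U - L + 1)" by auto
      then show "s \<in> (\<lambda>j. L + int j) ` {..<nat (U - L + 1)}" by blast
    qed
  qed
  show ?thesis using sum.reindex[OF inj, of g] img by simp
qed

lemma sum_ksubsets_displacement_le:
  assumes x: "0 \<le> x" "x < 1"
  shows "odd h \<Longrightarrow> (\<Sum>S\<in>ksubsets L U K. x ^ displacement h S) \<le> subset_weight_bound x K (2 * L + h)"
proof (induction K arbitrary: L h)
  case 0
  have "0 \<le> x\<^sup>2" "x\<^sup>2 < 1"
    using x by (auto simp: power_less_one_iff)
  then show ?case
    using gauss_binomial_0_right by (simp add: ksubsets_0 displacement_empty subset_weight_bound_def)
next
  case (Suc K)
  have "(\<Sum>S\<in>ksubsets L U (Suc K). x ^ displacement h S)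
      \<le> (\<Sum>s\<in>{L..U}. x ^ nat \<bar>2 * s + h\<bar> * subset_weight_bound x K (2 * s + h))"
    unfolding sum_ksubsets_Suc_displacement
  proof (intro sum_mono mult_left_mono)
    fix s
    have "odd (h - 2)"
      using Suc.prems by simp
    then have "(\<Sum>S\<in>ksubsets (s + 1) U K. x ^ displacement (h - 2) S)
        \<le> subset_weight_bound x K (2 * (s + 1) + (h - 2))"
      by (rule Suc.IH)
    then show "(\<Sum>S\<in>ksubsets (s + 1) U K. x ^ displacement (h - 2) S)
        \<le> subset_weight_bound x K (2 * s + h)"
      by simp
  qed (use x in simp)
  also have "\<dots> = (\<Sum>j<nat (U - L + 1). x ^ nat \<bar>(2 * L + h) + 2 * int j\<bar>
      * subset_weight_bound x K ((2 * L + h) + 2 * int j))"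
    by (simp add: sum_atLeastAtMost_int_shift algebra_simps)
  also have "\<dots> \<le> subset_weight_bound x (K + 1) (2 * L + h)"
    using Suc.prems by (intro sum_subset_weight_bound_odd[OF x]) simp
  finally show ?case
    by simp
qed

lemma subset_weight_bound_le:
  assumes x: "0 \<le> x" "x < 1"
  shows "subset_weight_bound x K z \<le> real (K + 1) * x ^ K * euler_bound (x\<^sup>2) ^ 2"
proof -
  let ?E = "euler_bound (x\<^sup>2)"
  have y: "0 \<le> x\<^sup>2" "x\<^sup>2 < 1"
    using x by (auto simp: power_less_one_iff)
  have A: "inv_qpochhammer (x\<^sup>2) a \<le> ?E" "0 \<le> inv_qpochhammer (x\<^sup>2) a" for a
    using inv_qpochhammer_le_euler_bound[OF y] inv_qpochhammer_pos[OF y] less_imp_le by blast+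
  have N: "gauss_binomial (x\<^sup>2) a m \<le> ?E" "0 \<le> gauss_binomial (x\<^sup>2) a m" for a m
    using gauss_binomial_le_inv_qpochhammer[OF y] A gauss_binomial_nonneg[OF y] order_trans by blast+
  have E: "1 \<le> ?E"
    by (rule euler_bound_ge_1[OF y])
  show ?thesis
  proof (cases "1 \<le> z")
    case True
    have "x ^ (K * nat z) \<le> x ^ K"
      using True x by (intro power_decreasing) auto
    moreover have "inv_qpochhammer (x\<^sup>2) K \<le> real (K + 1) * ?E * ?E"
    proof -
      have "1 * 1 \<le> real (K + 1) * ?E"
        using E by (intro mult_mono) auto
      then show ?thesis
        using A[of K] E mult_mono[of 1 "real (K + 1) * ?E" "inv_qpochhammer (x\<^sup>2) K" ?E] by simp
    qed
    ultimately have "x ^ (K * nat z) * inv_qpochhammer (x\<^sup>2) K \<le> x ^ K * (real (K + 1) * ?E * ?E)"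
      using A x by (intro mult_mono) auto
    then show ?thesis
      unfolding subset_weight_bound_def using True by (simp add: algebra_simps power2_eq_square)
  next
    case False
    have "(\<Sum>a\<le>K. gauss_binomial (x\<^sup>2) a (nat ((- 1 - z) div 2)) * inv_qpochhammer (x\<^sup>2) (K - a))
        \<le> (\<Sum>a\<le>K. ?E * ?E)"
      using A N E by (intro sum_mono mult_mono) auto
    also have "\<dots> = real (K + 1) * ?E ^ 2"
      by (simp add: power2_eq_square)
    finally have "x ^ K * (\<Sum>a\<le>K. gauss_binomial (x\<^sup>2) a (nat ((- 1 - z) div 2))
        * inv_qpochhammer (x\<^sup>2) (K - a))
        \<le> x ^ K * (real (K + 1) * ?E ^ 2)"
      using x by (intro mult_left_mono) auto
    then show ?thesis
      unfolding subset_weight_bound_def using False by (simp add: algebra_simps)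
  qed
qed

section \<open>Reversing a block\<close>

definition glue :: "int \<Rightarrow> int \<Rightarrow> (int \<Rightarrow> int) \<Rightarrow> (int \<Rightarrow> int) \<Rightarrow> int \<Rightarrow> int" where
  "glue a b \<alpha> \<beta> = (\<lambda>i. if i \<in> {a..b} then a + b - i else \<alpha> (\<beta> i))"

context
  fixes n a b :: int
  assumes an: "- n \<le> a" and bn: "b \<le> n" and ab: "a \<le> b + 1"
begin

context
  fixes \<alpha> \<beta> :: "int \<Rightarrow> int"
  assumes \<alpha>: "\<alpha> \<in> perms_of {- n..a - 1}" and \<beta>: "\<beta> \<in> perms_of {b + 1..n}"
begin

lemma glue_left: "x \<in> {- n..a - 1} \<Longrightarrow> glue a b \<alpha> \<beta> x = \<alpha> x"
  using \<beta> ab unfolding glue_def perms_of_def by auto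

lemma glue_right: "x \<in> {b + 1..n} \<Longrightarrow> glue a b \<alpha> \<beta> x = \<beta> x"
  using \<alpha> \<beta> ab bij_betw_apply[of \<beta> "{b + 1..n}" "{b + 1..n}" x]
  unfolding glue_def perms_of_def by auto

lemma glue_block: "x \<in> {a..b} \<Longrightarrow> glue a b \<alpha> \<beta> x = a + b - x"
  unfolding glue_def by simp

lemma glue_outside: "x \<notin> {- n..n} \<Longrightarrow> glue a b \<alpha> \<beta> x = x"
  using \<alpha> \<beta> an bn ab unfolding glue_def perms_of_def by auto

lemma bij_betw_glue_parts:
  shows "bij_betw (glue a b \<alpha> \<beta>) {- n..a - 1} {- n..a - 1}"
    and "bij_betw (glue a b \<alpha> \<beta>) {a..b} {a..b}"
    and "bij_betw (glue a b \<alpha> \<beta>) {b + 1..n} {b + 1..n}"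
proof -
  have "bij_betw \<alpha> {- n..a - 1} {- n..a - 1}"
    using \<alpha> unfolding perms_of_def by auto
  then show "bij_betw (glue a b \<alpha> \<beta>) {- n..a - 1} {- n..a - 1}"
    by (rule bij_betw_cong[THEN iffD1, rotated]) (simp add: glue_left)
  have "bij_betw \<beta> {b + 1..n} {b + 1..n}"
    using \<beta> unfolding perms_of_def by auto
  then show "bij_betw (glue a b \<alpha> \<beta>) {b + 1..n} {b + 1..n}"
    by (rule bij_betw_cong[THEN iffD1, rotated]) (simp add: glue_right)
  have "bij_betw (\<lambda>x. a + b - x) {a..b} {a..b}"
    by (rule bij_betwI[where g = "\<lambda>x. a + b - x"]) auto
  then show "bij_betw (glue a b \<alpha> \<beta>) {a..b} {a..b}"
    by (rule bij_betw_cong[THEN iffD1, rotated]) (simp add: glue_block)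
qed

lemma glue_in_perms_of: "glue a b \<alpha> \<beta> \<in> perms_of {- n..n}"
proof -
  have "{- n..n} = {- n..a - 1} \<union> {a..b} \<union> {b + 1..n}"
    using an bn ab by auto
  moreover have "bij_betw (glue a b \<alpha> \<beta>) ({- n..a - 1} \<union> {a..b} \<union> {b + 1..n})
      ({- n..a - 1} \<union> {a..b} \<union> {b + 1..n})"
    using bij_betw_glue_parts ab by (intro bij_betw_combine) auto
  ultimately show ?thesis
    unfolding perms_of_def using glue_outside by auto
qed

text \<open>The three parts are mapped to themselves and lie in increasing order, so every inversion
  of the glued permutation lies within one part.\<close>

lemma inversions_glue_le:
  "inversions (glue a b \<alpha> \<beta>) {- n..n}
    \<le> inversions \<alpha> {- n..a - 1} + inversions \<beta> {b + 1..n} + (card {a..b} choose 2)"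
proof -
  let ?g = "glue a b \<alpha> \<beta>"
  let ?I = "\<lambda>C h. {(i, j). i \<in> C \<and> j \<in> C \<and> i < j \<and> h j < h i}"
  let ?B = "{(i, j). i \<in> {a..b} \<and> j \<in> {a..b} \<and> i < j}"
  have maps: "x \<in> {- n..a - 1} \<Longrightarrow> ?g x \<in> {- n..a - 1}" "x \<in> {a..b} \<Longrightarrow> ?g x \<in> {a..b}"
    "x \<in> {b + 1..n} \<Longrightarrow> ?g x \<in> {b + 1..n}" for x
    using bij_betw_apply[OF bij_betw_glue_parts(1)] bij_betw_apply[OF bij_betw_glue_parts(2)]
      bij_betw_apply[OF bij_betw_glue_parts(3)] by blast+
  have "(i, j) \<in> ?I {- n..a - 1} \<alpha> \<union> ?I {b + 1..n} \<beta> \<union> ?B"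
    if ij: "i \<in> {- n..n}" "j \<in> {- n..n}" "i < j" "?g j < ?g i" for i j
  proof -
    have "i \<notin> {- n..a - 1} \<or> j \<in> {- n..a - 1}"
      using ij maps[of i] maps[of j] ab by (cases "j < a"; cases "j \<le> b") auto
    moreover have "i \<notin> {a..b} \<or> j \<notin> {b + 1..n}"
      using ij maps[of i] maps[of j] by auto
    ultimately show ?thesis
      using ij glue_left[of i] glue_left[of j] glue_right[of i] glue_right[of j] by auto
  qed
  then have sub: "?I {- n..n} ?g \<subseteq> ?I {- n..a - 1} \<alpha> \<union> ?I {b + 1..n} \<beta> \<union> ?B"
    by blast
  then have "inversions ?g {- n..n} \<le> card (?I {- n..a - 1} \<alpha> \<union> ?I {b + 1..n} \<beta> \<union> ?B)"
  proof -
    have fin: "finite (?I C h)" if "finite C" for C and h :: "int \<Rightarrow> int"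
      by (rule finite_subset[of _ "C \<times> C"]) (use that in auto)
    moreover have "finite ?B"
      by (rule finite_subset[of _ "{a..b} \<times> {a..b}"]) auto
    ultimately show ?thesis
      unfolding inversions_def by (intro card_mono[OF _ sub] finite_UnI fin finite_atLeastAtMost_int)
  qed
  also have "\<dots> \<le> card (?I {- n..a - 1} \<alpha>) + card (?I {b + 1..n} \<beta>) + card ?B"
    using card_Un_le[of "?I {- n..a - 1} \<alpha> \<union> ?I {b + 1..n} \<beta>" ?B]
      card_Un_le[of "?I {- n..a - 1} \<alpha>" "?I {b + 1..n} \<beta>"] by linarith
  finally show ?thesis
    unfolding inversions_def using card_ordered_pairs[of "{a..b}"] by simp
qed

end

lemma glue_inj: "inj_on (\<lambda>(\<alpha>, \<beta>). glue a b \<alpha> \<beta>) (perms_of {- n..a - 1} \<times> perms_of {b + 1..n})"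
proof (rule inj_onI, clarify)
  fix \<alpha> \<beta> \<alpha>' \<beta>'
  assume perms: "\<alpha> \<in> perms_of {- n..a - 1}" "\<beta> \<in> perms_of {b + 1..n}"
    "\<alpha>' \<in> perms_of {- n..a - 1}" "\<beta>' \<in> perms_of {b + 1..n}"
    and eq: "glue a b \<alpha> \<beta> = glue a b \<alpha>' \<beta>'"
  have "\<alpha> x = \<alpha>' x \<and> \<beta> x = \<beta>' x" for x
    using perms fun_cong[OF eq, of x] glue_left[of _ _ x] glue_right[of _ _ x] ab
    unfolding perms_of_def by (cases "x \<in> {- n..a - 1}"; cases "x \<in> {b + 1..n}") auto
  then show "\<alpha> = \<alpha>' \<and> \<beta> = \<beta>'"
    by auto
qed

lemma sum_q_inversions_reversing_block_ge:
  fixes q :: real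
  assumes q: "0 \<le> q" "q \<le> 1"
  shows "q ^ (card {a..b} choose 2) * q_factorial q (card {- n..a - 1}) * q_factorial q (card {b + 1..n})
    \<le> (\<Sum>\<pi>\<in>{\<pi>\<in>perms_of {- n..n}. \<forall>i\<in>{a..b}. \<pi> i = a + b - i}. q ^ inversions \<pi> {- n..n})"
proof -
  let ?L = "perms_of {- n..a - 1}" and ?R = "perms_of {b + 1..n}"
  let ?C = "card {a..b} choose 2"
  have "q ^ ?C * q_factorial q (card {- n..a - 1}) * q_factorial q (card {b + 1..n})
      = q ^ ?C * (\<Sum>\<alpha>\<in>?L. q ^ inversions \<alpha> {- n..a - 1}) * (\<Sum>\<beta>\<in>?R. q ^ inversions \<beta> {b + 1..n})"
    by (simp add: perms_of_eq_perms_between sum_q_inversions_perms_between)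
  also have "\<dots> = (\<Sum>(\<alpha>, \<beta>)\<in>?L \<times> ?R. q ^ (inversions \<alpha> {- n..a - 1} + inversions \<beta> {b + 1..n} + ?C))"
    by (simp add: sum_product sum.cartesian_product power_add sum_distrib_left algebra_simps)
  also have "\<dots> \<le> (\<Sum>(\<alpha>, \<beta>)\<in>?L \<times> ?R. q ^ inversions (glue a b \<alpha> \<beta>) {- n..n})"
    using inversions_glue_le q by (intro sum_mono) (auto intro: power_decreasing)
  also have "\<dots> = (\<Sum>\<pi>\<in>(\<lambda>(\<alpha>, \<beta>). glue a b \<alpha> \<beta>) ` (?L \<times> ?R). q ^ inversions \<pi> {- n..n})"
    by (subst sum.reindex[OF glue_inj]) (simp add: case_prod_unfold)
  also have "\<dots> \<le> (\<Sum>\<pi>\<in>{\<pi>\<in>perms_of {- n..n}. \<forall>i\<in>{a..b}. \<pi> i = a + b - i}. q ^ inversions \<pi> {- n..n})"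
    using glue_in_perms_of glue_block q
    by (intro sum_mono2) (auto simp: finite_perms_of)
  finally show ?thesis .
qed

end

section \<open>The Mallows permutation of the integers\<close>

lemma enat_le_C1_iff: "enat K \<le> C1 g \<longleftrightarrow> (\<exists>S. finite S \<and> card S = K \<and> (\<forall>s\<in>S. g s = s))"
proof
  assume "enat K \<le> C1 g"
  then obtain S where "S \<subseteq> {i. g i = i}" "finite S" "card S = K"
    unfolding C1_def
    by (cases "finite {i. g i = i}")
      (auto dest: infinite_arbitrarily_large intro: finite_subset elim!: obtain_subset_with_card_n)
  then show "\<exists>S. finite S \<and> card S = K \<and> (\<forall>s\<in>S. g s = s)"
    by blast
next
  assume "\<exists>S. finite S \<and> card S = K \<and> (\<forall>s\<in>S. g s = s)"
  then obtain S where "finite S" "card S = K" "S \<subseteq> {i. g i = i}"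
    by auto
  then show "enat K \<le> C1 g"
    unfolding C1_def using card_mono by (cases "finite {i. g i = i}") auto
qed

lemma bigomega_of_const_mult_le:
  fixes P g :: "nat \<Rightarrow> real"
  assumes "0 < c" "\<And>k. 0 \<le> g k" "\<And>k. c * g k \<le> P k"
  shows "P \<in> \<Omega>(g)"
proof (rule landau_omega.bigI[OF assms(1)])
  have "c * norm (g k) \<le> norm (P k)" for k
    using assms(3)[of k] mult_nonneg_nonneg[OF less_imp_le[OF assms(1)] assms(2)[of k]] assms(2)[of k]
    by simp
  then show "\<forall>\<^sub>F k in sequentially. c * norm (g k) \<le> norm (P k)"
    by (intro always_eventually) blast
qed

lemma smallo_of_le_mult_tendsto_0:
  fixes P g e :: "nat \<Rightarrow> real"
  assumes "\<And>k. 0 \<le> P k" "\<And>k. 0 \<le> g k" "\<And>k. P k \<le> g k * e k" "e \<longlonglongrightarrow> 0"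
  shows "P \<in> o(g)"
proof (rule landau_o.smallI)
  fix c :: real assume "0 < c"
  with assms(4) have "\<forall>\<^sub>F k in sequentially. e k < c"
    by (rule order_tendstoD)
  then show "\<forall>\<^sub>F k in sequentially. norm (P k) \<le> c * norm (g k)"
  proof eventually_elim
    case (elim k)
    have "P k \<le> g k * c"
      using assms(2,3)[of k] elim by (meson less_imp_le mult_left_mono order_trans)
    then show ?case
      using assms(1,2)[of k] by (simp add: mult.commute)
  qed
qed

locale mallows_Z_space = prob_space M for M :: "'a measure" +
  fixes \<Sigma> :: "'a \<Rightarrow> int \<Rightarrow> int" and q :: real
  assumes q_pos: "0 < q" and q_less_1: "q < 1" and mallows: "mallows_Z M q \<Sigma>"
begin

lemma q_factorial_nonzero: "q_factorial q n \<noteq> 0"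
  using q_factorial_pos[of q n] q_pos by simp

definition pattern_event :: "nat \<Rightarrow> (int \<Rightarrow> int) set \<Rightarrow> 'a set" where
  "pattern_event n F = {\<omega> \<in> space M. pattern (\<Sigma> \<omega>) {- int n..int n} \<in> F}"

lemma measure_pattern_event_singleton:
  assumes "\<pi> \<in> perms_of {- int n..int n}"
  shows "measure M (pattern_event n {\<pi>})
    = q ^ inversions \<pi> {- int n..int n} / q_factorial q (card {- int n..int n})"
  using mallows assms
  unfolding mallows_Z_def mallows_prob_def pattern_event_def perms_of_eq_perms_between
  by (simp add: sum_q_inversions_perms_between)

text \<open>The law of \<open>\<Sigma>\<close> only prescribes measures, so the measurability of pattern events is read
  off from their positive measure.\<close>

lemma pattern_event_singleton_in_sets:
  assumes "\<pi> \<in> perms_of {- int n..int n}"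
  shows "pattern_event n {\<pi>} \<in> sets M"
proof (rule ccontr)
  assume "pattern_event n {\<pi>} \<notin> sets M"
  then have "measure M (pattern_event n {\<pi>}) = 0"
    by (simp add: measure_notin_sets)
  then show False
    using measure_pattern_event_singleton[OF assms] q_pos q_factorial_nonzero by simp
qed

lemma pattern_event_Union: "pattern_event n F = (\<Union>\<pi>\<in>F. pattern_event n {\<pi>})"
  unfolding pattern_event_def by auto

lemma pattern_event_in_sets:
  assumes "F \<subseteq> perms_of {- int n..int n}"
  shows "pattern_event n F \<in> sets M"
  unfolding pattern_event_Union[of n F]
  using assms pattern_event_singleton_in_sets finite_subset[OF assms finite_perms_of]
  by (intro sets.finite_UN) auto

lemma measure_pattern_event:
  assumes F: "F \<subseteq> perms_of {- int n..int n}"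
  shows "measure M (pattern_event n F)
    = (\<Sum>\<pi>\<in>F. q ^ inversions \<pi> {- int n..int n}) / q_factorial q (card {- int n..int n})"
proof -
  have "measure M (pattern_event n F) = (\<Sum>\<pi>\<in>F. measure M (pattern_event n {\<pi>}))"
    unfolding pattern_event_Union[of n F]
    using F pattern_event_singleton_in_sets finite_subset[OF F finite_perms_of]
    by (intro finite_measure_finite_Union) (auto simp: disjoint_family_on_def pattern_event_def)
  also have "\<dots> = (\<Sum>\<pi>\<in>F. q ^ inversions \<pi> {- int n..int n} / q_factorial q (card {- int n..int n}))"
    using F measure_pattern_event_singleton by (intro sum.cong) auto
  finally show ?thesis
    by (simp add: sum_divide_distrib)
qed

lemma AE_pattern_in_perms_of: "AE \<omega> in M. \<forall>n. pattern (\<Sigma> \<omega>) {- int n..int n} \<in> perms_of {- int n..int n}"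
proof (subst AE_all_countable, intro allI)
  fix n
  have "measure M (pattern_event n (perms_of {- int n..int n})) = 1"
    using q_factorial_nonzero
    by (simp add: measure_pattern_event perms_of_eq_perms_between sum_q_inversions_perms_between)
  then have "AE \<omega> in M. \<omega> \<in> pattern_event n (perms_of {- int n..int n})"
    by (rule AE_prob_1)
  then show "AE \<omega> in M. pattern (\<Sigma> \<omega>) {- int n..int n} \<in> perms_of {- int n..int n}"
    by (rule AE_mp) (auto simp: pattern_event_def)
qed

lemma AE_pattern_eventually_eq:
  "AE \<omega> in M. \<forall>i. \<exists>N. \<forall>n\<ge>N. pattern (\<Sigma> \<omega>) {- int n..int n} i = \<Sigma> \<omega> i"
  using mallows unfolding mallows_Z_def by simp

lemma agree_event_in_sets:
  assumes "finite \<T>" "\<forall>S\<in>\<T>. finite S"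
  shows "{\<omega> \<in> space M. \<exists>S\<in>\<T>. \<forall>s\<in>S. \<Sigma> \<omega> s = t s} \<in> sets M"
proof -
  have "{\<omega> \<in> space M. \<Sigma> \<omega> s = t s} \<in> sets M" for s
  proof -
    have "(\<lambda>\<omega>. \<Sigma> \<omega> s) \<in> measurable M (count_space UNIV)"
      using mallows unfolding mallows_Z_def by simp
    then have "(\<lambda>\<omega>. \<Sigma> \<omega> s) -` {t s} \<inter> space M \<in> sets M"
      by (rule measurable_sets) auto
    then show ?thesis
      by (simp add: vimage_def Int_def conj_commute)
  qed
  then show ?thesis
    using assms by (intro sets.sets_Collect_finite_Ex sets.sets_Collect_finite_All) auto
qed

text \<open>Almost surely the patterns of \<open>\<Sigma>\<close> on \<open>{-n..n}\<close> eventually agree with \<open>\<Sigma>\<close> on any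
  finite set, so dominated convergence applies.\<close>

lemma measure_pattern_agree_tendsto:
  assumes fin: "finite \<T>" "\<forall>S\<in>\<T>. finite S"
  shows "(\<lambda>n. measure M (pattern_event n {\<pi> \<in> perms_of {- int n..int n}. \<exists>S\<in>\<T>. \<forall>s\<in>S. \<pi> s = t s}))
    \<longlonglongrightarrow> measure M {\<omega> \<in> space M. \<exists>S\<in>\<T>. \<forall>s\<in>S. \<Sigma> \<omega> s = t s}"
proof -
  define A where "A n = pattern_event n {\<pi> \<in> perms_of {- int n..int n}. \<exists>S\<in>\<T>. \<forall>s\<in>S. \<pi> s = t s}" for n
  define B where "B = {\<omega> \<in> space M. \<exists>S\<in>\<T>. \<forall>s\<in>S. \<Sigma> \<omega> s = t s}"
  have A: "A n \<in> sets M" for n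
    unfolding A_def by (rule pattern_event_in_sets) auto
  have B: "B \<in> sets M"
    unfolding B_def using agree_event_in_sets[OF fin] .
  have "AE \<omega> in M. \<forall>\<^sub>F n in sequentially. indicator (A n) \<omega> = (indicator B \<omega> :: real)"
    using AE_pattern_in_perms_of AE_pattern_eventually_eq
  proof eventually_elim
    fix \<omega> assume perm: "\<forall>n. pattern (\<Sigma> \<omega>) {- int n..int n} \<in> perms_of {- int n..int n}"
      and lim: "\<forall>i. \<exists>N. \<forall>n\<ge>N. pattern (\<Sigma> \<omega>) {- int n..int n} i = \<Sigma> \<omega> i"
    have "\<forall>\<^sub>F n in sequentially. \<forall>i\<in>\<Union>\<T>. pattern (\<Sigma> \<omega>) {- int n..int n} i = \<Sigma> \<omega> i"
      using fin lim by (intro eventually_ball_finite) (auto simp: eventually_sequentially)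
    then show "\<forall>\<^sub>F n in sequentially. indicator (A n) \<omega> = (indicator B \<omega> :: real)"
      by eventually_elim (use perm in \<open>auto simp: A_def B_def pattern_event_def indicator_def\<close>)
  qed
  then have "AE \<omega> in M. (\<lambda>n. indicator (A n) \<omega>) \<longlonglongrightarrow> (indicator B \<omega> :: real)"
    by eventually_elim (rule tendsto_eventually)
  then have "(\<lambda>n. integral\<^sup>L M (indicator (A n))) \<longlonglongrightarrow> integral\<^sup>L M (indicator B :: 'a \<Rightarrow> real)"
    using A B by (intro integral_dominated_convergence[where w = "\<lambda>_. 1"]) auto
  moreover have "A n \<subseteq> space M" for n
    unfolding A_def pattern_event_def by auto
  ultimately show ?thesis
    using B_def A_def by (simp add: Int_absorb2)
qed

lemma measure_reversed_block_ge:
  fixes a b :: int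
  assumes ab: "a \<le> b + 1"
  shows "q ^ (card {a..b} choose 2) * (1 - q) ^ card {a..b} / euler_bound q ^ 2
    \<le> measure M {\<omega> \<in> space M. \<forall>i\<in>{a..b}. \<Sigma> \<omega> i = a + b - i}"
proof -
  let ?K = "card {a..b}" and ?F = "\<lambda>n. {\<pi> \<in> perms_of {- int n..int n}. \<forall>i\<in>{a..b}. \<pi> i = a + b - i}"
  have q: "0 \<le> q" "q < 1"
    using q_pos q_less_1 by auto
  have "q ^ (?K choose 2) * (1 - q) ^ ?K / euler_bound q ^ 2 \<le> measure M (pattern_event n (?F n))"
    if n: "nat (\<bar>a\<bar> + \<bar>b\<bar>) \<le> n" for n
  proof -
    have an: "- int n \<le> a" and bn: "b \<le> int n"
      using n by auto
    let ?L = "card {- int n..a - 1}" and ?R = "card {b + 1..int n}"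
    have "q ^ (?K choose 2) * (1 - q) ^ ?K / euler_bound q ^ 2
        = q ^ (?K choose 2) * ((1 - q) ^ ?K / euler_bound q ^ 2)"
      by simp
    also have "\<dots> \<le> q ^ (?K choose 2) * (q_factorial q ?L * q_factorial q ?R / q_factorial q (?L + ?K + ?R))"
      using q_factorial_ratio_ge[OF q] q by (intro mult_left_mono) auto
    also have "?L + ?K + ?R = card {- int n..int n}"
      using an bn ab by simp
    also have "q ^ (?K choose 2) * (q_factorial q ?L * q_factorial q ?R
        / q_factorial q (card {- int n..int n}))
        \<le> measure M (pattern_event n (?F n))"
      using sum_q_inversions_reversing_block_ge[OF an bn ab q(1) less_imp_le[OF q(2)]]
        less_imp_le[OF q_factorial_pos[OF q(1)]]
      by (subst measure_pattern_event) (auto intro!: divide_right_mono simp: mult.assoc)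
    finally show ?thesis .
  qed
  moreover have "(\<lambda>n. measure M (pattern_event n (?F n)))
      \<longlonglongrightarrow> measure M {\<omega> \<in> space M. \<forall>i\<in>{a..b}. \<Sigma> \<omega> i = a + b - i}"
    using measure_pattern_agree_tendsto[of "{{a..b}}" "\<lambda>i. a + b - i"] by simp
  ultimately show ?thesis
    by (intro LIMSEQ_le_const) auto
qed

lemma measure_reflecting_ksubset_pattern_le:
  fixes d :: int and K m n :: nat
  assumes hodd: "odd (int K - 1 - d)" and n: "int m + \<bar>d\<bar> \<le> int n"
  shows "measure M (pattern_event n
      {\<pi> \<in> perms_of {- int n..int n}. \<exists>S\<in>ksubsets (- int m) (int m) K. \<forall>s\<in>S. \<pi> s = d - s})
    \<le> q ^ (K choose 2) * (1 - q) ^ K * euler_bound q * (real (K + 1) * q ^ K * euler_bound (q\<^sup>2) ^ 2)"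
proof -
  let ?T = "ksubsets (- int m) (int m) K" and ?A = "{- int n..int n}" and ?h = "int K - 1 - d"
  let ?c = "q ^ (K choose 2) * (1 - q) ^ K * euler_bound q"
  define F where "F S = {\<pi> \<in> perms_of ?A. \<forall>s\<in>S. \<pi> s = d - s}" for S
  have q: "0 \<le> q" "q < 1"
    using q_pos q_less_1 by auto
  have one: "measure M (pattern_event n (F S)) \<le> ?c * q ^ displacement ?h S" if S: "S \<in> ?T" for S
  proof -
    have SA: "S \<subseteq> ?A" and dSA: "(\<lambda>s. d - s) ` S \<subseteq> ?A" and cS: "card S = K"
      using S n unfolding ksubsets_def by force+
    have KA: "K \<le> card ?A"
      using card_mono[OF _ SA] cS by simp
    have "measure M (pattern_event n (F S))
        \<le> q ^ ((K choose 2) + displacement ?h S) * q_factorial q (card ?A - K) / q_factorial q (card ?A)"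
      unfolding F_def
      using sum_q_inversions_reflecting_le[OF SA dSA q(1) less_imp_le[OF q(2)]]
        less_imp_le[OF q_factorial_pos[OF q(1)]] cS
      by (subst measure_pattern_event) (auto intro!: divide_right_mono)
    also have "\<dots> \<le> q ^ ((K choose 2) + displacement ?h S) * ((1 - q) ^ K * euler_bound q)"
      using mult_left_mono[OF q_factorial_ratio_le[OF q KA], of "q ^ ((K choose 2) + displacement ?h S)"] q
      by (simp add: times_divide_eq_right)
    finally show ?thesis
      by (simp add: power_add algebra_simps)
  qed
  have "measure M (pattern_event n
      {\<pi> \<in> perms_of ?A. \<exists>S\<in>?T. \<forall>s\<in>S. \<pi> s = d - s}) \<le> (\<Sum>S\<in>?T. measure M (pattern_event n (F S)))"
  proof -
    have "pattern_event n {\<pi> \<in> perms_of ?A. \<exists>S\<in>?T. \<forall>s\<in>S. \<pi> s = d - s} = (\<Union>S\<in>?T. pattern_event n (F S))"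
      unfolding pattern_event_def F_def by auto
    then show ?thesis
      using pattern_event_in_sets[of "F _" n] finite_ksubsets
      by (simp add: measure_UNION_le F_def)
  qed
  also have "\<dots> \<le> ?c * (\<Sum>S\<in>?T. q ^ displacement ?h S)"
    using one by (simp add: sum_distrib_left sum_mono)
  also have "(\<Sum>S\<in>?T. q ^ displacement ?h S) \<le> real (K + 1) * q ^ K * euler_bound (q\<^sup>2) ^ 2"
    using sum_ksubsets_displacement_le[OF q hodd] subset_weight_bound_le[OF q] by (rule order_trans)
  then have "?c * (\<Sum>S\<in>?T. q ^ displacement ?h S) \<le> ?c * (real (K + 1) * q ^ K * euler_bound (q\<^sup>2) ^ 2)"
    using q euler_bound_ge_1[OF q] by (intro mult_left_mono) auto
  finally show ?thesis .
qed

lemma fixed_points_reflection_eq_UN: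
  assumes f: "\<And>x. f x = d - x"
  shows "{\<omega> \<in> space M. enat K \<le> C1 (f \<circ> \<Sigma> \<omega>)}
    = (\<Union>m. {\<omega> \<in> space M. \<exists>S\<in>ksubsets (- int m) (int m) K. \<forall>s\<in>S. \<Sigma> \<omega> s = d - s})"
proof -
  have fixed: "(f \<circ> \<Sigma> \<omega>) s = s \<longleftrightarrow> \<Sigma> \<omega> s = d - s" for \<omega> s
    using f by auto
  have bounded: "finite S \<longleftrightarrow> (\<exists>m. S \<subseteq> {- int m..int m})" for S :: "int set"
  proof
    assume "finite S"
    then have "nat \<bar>x\<bar> \<le> Max (nat ` abs ` S)" if "x \<in> S" for x
      using that by (intro Max_ge) auto
    then have "S \<subseteq> {- int (Max (nat ` abs ` S))..int (Max (nat ` abs ` S))}"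
      by force
    then show "\<exists>m. S \<subseteq> {- int m..int m}" ..
  qed (auto intro: finite_subset)
  show ?thesis
    unfolding enat_le_C1_iff fixed bounded ksubsets_def by blast
qed

lemma fixed_points_reflection_in_sets:
  assumes "\<And>x. f x = d - x"
  shows "{\<omega> \<in> space M. enat K \<le> C1 (f \<circ> \<Sigma> \<omega>)} \<in> sets M"
  unfolding fixed_points_reflection_eq_UN[OF assms]
  by (intro sets.countable_UN'' agree_event_in_sets finite_ksubsets) (auto simp: finite_of_ksubsets)

lemma measure_fixed_points_reflection_ge:
  assumes f: "\<And>x. f x = d - x" and odd: "odd (int K - d)"
  shows "q ^ (K choose 2) * (1 - q) ^ K / euler_bound q ^ 2
    \<le> measure M {\<omega> \<in> space M. enat K \<le> C1 (f \<circ> \<Sigma> \<omega>)}"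
proof -
  obtain c where c: "int K - d = 2 * c + 1"
    using odd by (rule oddE)
  define a where "a = - c"
  define b where "b = a + int K - 1"
  have ab: "a + b = d"
    using c unfolding a_def b_def by simp
  have K: "card {a..b} = K"
    unfolding b_def by simp
  have "{\<omega> \<in> space M. \<forall>i\<in>{a..b}. \<Sigma> \<omega> i = a + b - i} \<subseteq> {\<omega> \<in> space M. enat K \<le> C1 (f \<circ> \<Sigma> \<omega>)}"
    unfolding enat_le_C1_iff using f ab K by (auto intro!: exI[of _ "{a..b}"])
  then have "measure M {\<omega> \<in> space M. \<forall>i\<in>{a..b}. \<Sigma> \<omega> i = a + b - i}
      \<le> measure M {\<omega> \<in> space M. enat K \<le> C1 (f \<circ> \<Sigma> \<omega>)}"
    by (intro finite_measure_mono fixed_points_reflection_in_sets[OF f])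
  then show ?thesis
    using measure_reversed_block_ge[of a b] K unfolding b_def by simp
qed

lemma measure_fixed_points_reflection_le:
  assumes f: "\<And>x. f x = d - x" and odd: "odd (int K - 1 - d)"
  shows "measure M {\<omega> \<in> space M. enat K \<le> C1 (f \<circ> \<Sigma> \<omega>)}
    \<le> q ^ (K choose 2) * (1 - q) ^ K * (euler_bound q * (real (K + 1) * q ^ K * euler_bound (q\<^sup>2) ^ 2))"
proof -
  let ?B = "q ^ (K choose 2) * (1 - q) ^ K * euler_bound q * (real (K + 1) * q ^ K * euler_bound (q\<^sup>2) ^ 2)"
  define X where "X m = {\<omega> \<in> space M. \<exists>S\<in>ksubsets (- int m) (int m) K. \<forall>s\<in>S. \<Sigma> \<omega> s = d - s}" for m
  have fin: "finite (ksubsets (- int m) (int m) K)" "\<forall>S\<in>ksubsets (- int m) (int m) K. finite S" for m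
    by (auto simp: finite_ksubsets finite_of_ksubsets)
  have "measure M (X m) \<le> ?B" for m
  proof (rule LIMSEQ_le_const2)
    show "(\<lambda>n. measure M (pattern_event n {\<pi> \<in> perms_of {- int n..int n}.
        \<exists>S\<in>ksubsets (- int m) (int m) K. \<forall>s\<in>S. \<pi> s = d - s})) \<longlonglongrightarrow> measure M (X m)"
      unfolding X_def by (rule measure_pattern_agree_tendsto[OF fin])
    show "\<exists>N. \<forall>n\<ge>N. measure M (pattern_event n {\<pi> \<in> perms_of {- int n..int n}.
        \<exists>S\<in>ksubsets (- int m) (int m) K. \<forall>s\<in>S. \<pi> s = d - s}) \<le> ?B"
      using measure_reflecting_ksubset_pattern_le[OF odd] by (intro exI[of _ "nat (int m + \<bar>d\<bar>)"]) auto
  qed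
  moreover have "(\<lambda>m. measure M (X m)) \<longlonglongrightarrow> measure M (\<Union>m. X m)"
    using agree_event_in_sets[OF fin] unfolding X_def
    by (intro finite_Lim_measure_incseq) (auto simp: incseq_def ksubsets_def, fastforce)
  ultimately have "measure M (\<Union>m. X m) \<le> ?B"
    by (intro LIMSEQ_le_const2) auto
  then show ?thesis
    unfolding fixed_points_reflection_eq_UN[OF f] X_def by (simp add: mult.assoc)
qed

lemma fixed_points_reflection_bigomega:
  fixes \<kappa> :: "nat \<Rightarrow> nat"
  assumes "\<And>x. f x = d - x" and "\<And>k. odd (int (\<kappa> k) - d)"
  shows "(\<lambda>k. measure M {\<omega> \<in> space M. enat (\<kappa> k) \<le> C1 (f \<circ> \<Sigma> \<omega>)})
    \<in> \<Omega>(\<lambda>k. q ^ (\<kappa> k choose 2) * (1 - q) ^ \<kappa> k)"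
  using measure_fixed_points_reflection_ge[OF assms] q_less_1 euler_bound_ge_1[of q] q_pos
  by (intro bigomega_of_const_mult_le[where c = "1 / euler_bound q ^ 2"]) auto

lemma fixed_points_reflection_smallo:
  fixes \<kappa> :: "nat \<Rightarrow> nat"
  assumes "\<And>x. f x = d - x" and "strict_mono \<kappa>" and "\<And>k. odd (int (\<kappa> k) - 1 - d)"
  shows "(\<lambda>k. measure M {\<omega> \<in> space M. enat (\<kappa> k) \<le> C1 (f \<circ> \<Sigma> \<omega>)})
    \<in> o(\<lambda>k. q ^ (\<kappa> k choose 2) * (1 - q) ^ \<kappa> k)"
proof (rule smallo_of_le_mult_tendsto_0)
  have "(\<lambda>n. real n * q ^ n + q ^ n) \<longlonglongrightarrow> 0 + 0"
    using q_pos q_less_1 by (intro tendsto_add powser_times_n_limit_0 LIMSEQ_power_zero) auto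
  then have "(\<lambda>n. real (n + 1) * q ^ n) \<longlonglongrightarrow> 0"
    by (simp add: algebra_simps)
  from LIMSEQ_subseq_LIMSEQ[OF this assms(2)]
  have "(\<lambda>k. euler_bound q * (real (\<kappa> k + 1) * q ^ \<kappa> k * euler_bound (q\<^sup>2) ^ 2))
      \<longlonglongrightarrow> euler_bound q * (0 * euler_bound (q\<^sup>2) ^ 2)"
    unfolding comp_def by (intro tendsto_intros)
  then show "(\<lambda>k. euler_bound q * (real (\<kappa> k + 1) * q ^ \<kappa> k * euler_bound (q\<^sup>2) ^ 2)) \<longlonglongrightarrow> 0"
    by simp
qed (use measure_fixed_points_reflection_le[OF assms(1,3)] q_pos q_less_1 in auto)

end

theorem proposition9p1:
  fixes M :: "'a measure" and \<Sigma> :: "'a \<Rightarrow> int \<Rightarrow> int" and q :: real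
  assumes "prob_space M" and "0 < q" and "q < 1" and "mallows_Z M q \<Sigma>"
  shows "(\<lambda>k::nat. measure M {\<omega> \<in> space M. enat (2*k) \<le> C1 (rho_map \<circ> \<Sigma> \<omega>)})
           \<in> \<Omega>(\<lambda>k. q ^ ((2*k) choose 2) * (1 - q) ^ (2*k)) \<and>
         (\<lambda>k::nat. measure M {\<omega> \<in> space M. enat (2*k) \<le> C1 (r_map \<circ> \<Sigma> \<omega>)})
           \<in> o(\<lambda>k. q ^ ((2*k) choose 2) * (1 - q) ^ (2*k)) \<and>
         (\<lambda>k::nat. measure M {\<omega> \<in> space M. enat (2*k+1) \<le> C1 (r_map \<circ> \<Sigma> \<omega>)})
           \<in> \<Omega>(\<lambda>k. q ^ ((2*k+1) choose 2) * (1 - q) ^ (2*k+1)) \<and>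
         (\<lambda>k::nat. measure M {\<omega> \<in> space M. enat (2*k+1) \<le> C1 (rho_map \<circ> \<Sigma> \<omega>)})
           \<in> o(\<lambda>k. q ^ ((2*k+1) choose 2) * (1 - q) ^ (2*k+1))"
proof -
  interpret mallows_Z_space M \<Sigma> q
    using assms by (simp add: mallows_Z_space_def mallows_Z_space_axioms_def)
  have rho: "rho_map x = 1 - x" and r: "r_map x = 0 - x" for x
    by (simp_all add: rho_map_def r_map_def)
  have "strict_mono (\<lambda>k::nat. 2 * k)" "strict_mono (\<lambda>k::nat. 2 * k + 1)"
    by (auto intro: strict_monoI)
  then show ?thesis
    by (intro conjI fixed_points_reflection_bigomega[OF rho] fixed_points_reflection_smallo[OF rho]
        fixed_points_reflection_bigomega[OF r] fixed_points_reflection_smallo[OF r]) auto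
qed

end
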